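(* Let $\Omega\subset\mathbb{R}^2$ be a box with mesh-aligned endpoints for the mesh size vector $h=(h_1,h_2)$, and write $\overline{\Omega}=\bigcup_i(T_i^1\cup T_i^2)$, where each $T_i^\alpha$ is a translate of $T^\alpha$ ($\alpha=1,2$) by a grid vector. For every $u:\overline{\Omega}_h\to[0,\infty)$ there exists a continuous function $\tilde u:\overline{\Omega}\to[0,\infty)$, linear on each $T_i^\alpha$, such that $u(y)=\tilde u(y)$ for all $y\in\overline{\Omega}_h$, and $D_i^+u(x)=\frac{\partial\tilde u}{\partial x_i}(x)$ for all $x\in\overline{\Omega}_h\setminus\partial_i^+\Omega_h$, $i=1,2$ (the partial derivative understood as the right-sided derivative, $\tilde u$ being linear on the segment $[x,x+h_ie_i]$). Moreover, for $p\in\mathbb{N}$, $$\frac{1}{8p^2}\sum_{x\in\overline{\Omega}_h}u(x)^p\mathbf{h}\le\int_\Omega\tilde u(x)^p\,dx\le8\sum_{x\in\overline{\Omega}_h}u(x)^p\mathbf{h},$$ and $$\int_\Omega|\nabla\tilde u|^2\,dx\le\sum_{i=1}^2\sum_{x\in\overline{\Omega}_h\setminus\partial_i^+\Omega_h}|D_i^+u(x)|^2\mathbf{h}.$$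
   Context: $\mathbb{R}^2_h=\{(h_1z_1,h_2z_2):z_j\in\mathbb{Z}\}$; $\Omega=(a_1,b_1)\times(a_2,b_2)$ with $a_j=k_jh_j$, $b_j=l_jh_j$, $k_j,l_j\in\mathbb{Z}\cup\{\pm\infty\}$, $l_j-k_j>1$; $\overline{\Omega}_h=\overline{\Omega}\cap\mathbb{R}^2_h$, $\partial_i^+\Omega_h=\partial\Omega\cap\mathbb{R}^2_h\cap\{x_i=b_i\}$, $\mathbf{h}=h_1h_2$, $D_i^+u(x)=(u(x+h_ie_i)-u(x))/h_i$. The triangles are $T^1=\operatorname{conv}\{(0,0),(h_1,0),(h_1,h_2)\}$ and $T^2=\operatorname{conv}\{(0,0),(0,h_2),(h_1,h_2)\}$, which partition the mesh box $[0,h_1]\times[0,h_2]$. *)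

theory Defs
  imports "HOL-Analysis.Analysis"
begin

definition box_ereal :: "ereal \<Rightarrow> ereal \<Rightarrow> ereal \<Rightarrow> ereal \<Rightarrow> (real \<times> real) set" where
  "box_ereal a1 b1 a2 b2 =
     {x. a1 < ereal (fst x) \<and> ereal (fst x) < b1 \<and> a2 < ereal (snd x) \<and> ereal (snd x) < b2}"

definition lower_aligned :: "real \<Rightarrow> ereal \<Rightarrow> bool" where
  "lower_aligned h a \<longleftrightarrow> a = -\<infinity> \<or> (\<exists>k::int. a = ereal (h * of_int k))"

definition upper_aligned :: "real \<Rightarrow> ereal \<Rightarrow> bool" where
  "upper_aligned h b \<longleftrightarrow> b = \<infinity> \<or> (\<exists>l::int. b = ereal (h * of_int l))"

definition grid :: "real \<Rightarrow> real \<Rightarrow> (real \<times> real) set" where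
  "grid h1 h2 = {(h1 * of_int z1, h2 * of_int z2) | z1 z2 :: int. True}"

definition tri1 :: "real \<Rightarrow> real \<Rightarrow> int \<Rightarrow> int \<Rightarrow> (real \<times> real) set" where
  "tri1 h1 h2 z1 z2 = convex hull {(h1 * of_int z1, h2 * of_int z2),
      (h1 * of_int z1 + h1, h2 * of_int z2), (h1 * of_int z1 + h1, h2 * of_int z2 + h2)}"

definition tri2 :: "real \<Rightarrow> real \<Rightarrow> int \<Rightarrow> int \<Rightarrow> (real \<times> real) set" where
  "tri2 h1 h2 z1 z2 = convex hull {(h1 * of_int z1, h2 * of_int z2),
      (h1 * of_int z1, h2 * of_int z2 + h2), (h1 * of_int z1 + h1, h2 * of_int z2 + h2)}"

definition affine_on :: "(real \<times> real \<Rightarrow> real) \<Rightarrow> (real \<times> real) set \<Rightarrow> bool" where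
  "affine_on f T \<longleftrightarrow> (\<exists>c0 c1 c2. \<forall>y\<in>T. f y = c0 + c1 * fst y + c2 * snd y)"

definition Dplus1 :: "real \<Rightarrow> (real \<times> real \<Rightarrow> real) \<Rightarrow> real \<times> real \<Rightarrow> real" where
  "Dplus1 h1 u x = (u (fst x + h1, snd x) - u x) / h1"

definition Dplus2 :: "real \<Rightarrow> (real \<times> real \<Rightarrow> real) \<Rightarrow> real \<times> real \<Rightarrow> real" where
  "Dplus2 h2 u x = (u (fst x, snd x + h2) - u x) / h2"

end

theory Submission
  imports Defs
begin

text \<open>After rescaling by \<open>h\<close> everything happens on the unit lattice, where \<open>\<tilde>u\<close> is the
  piecewise linear interpolant \<open>\<Sum>\<^sub>z u(z) \<phi>\<^sub>z\<close> with respect to the triangulation cut out by the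
  diagonals \<open>x\<^sub>1 - x\<^sub>2 \<in> \<int>\<close>. On a triangle the hat functions \<open>\<phi>\<^sub>z\<close> are the barycentric coordinates.
  Hence \<open>\<tilde>u\<close> is bounded on a cell by the largest of its four nodal values, and \<open>\<tilde>u\<^sup>p\<close> by the sum of
  their \<open>p\<close>-th powers; as every node is a corner of at most four cells this gives the upper bound.
  Conversely \<open>\<tilde>u\<^sup>p \<ge> \<Sum>\<^sub>z u(z)\<^sup>p \<phi>\<^sub>z\<^sup>p\<close> by superadditivity of \<open>t \<mapsto> t\<^sup>p\<close>, a barycentric coordinate satisfies
  \<open>\<integral>\<^sub>T \<lambda>\<^sup>p = 1/((p+1)(p+2))\<close> on a unit triangle, and every node of the box is a corner of one of its
  cells; \<open>(p+1)(p+2) \<le> 8p\<^sup>2\<close> gives the lower bound. Off the (null) triangle edges the gradient of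
  \<open>\<tilde>u\<close> consists of the forward differences along two edges of the triangle, and each edge belongs to
  at most two triangles of area \<open>h\<^sub>1h\<^sub>2/2\<close>, which gives the energy bound.\<close>

lemma nn_integral_lborel_pair:
  fixes f :: "real \<times> real \<Rightarrow> ennreal"
  assumes [measurable]: "f \<in> borel_measurable borel"
  shows "(\<integral>\<^sup>+z. f z \<partial>lborel) = (\<integral>\<^sup>+x. \<integral>\<^sup>+y. f (x, y) \<partial>lborel \<partial>lborel)"
proof -
  have "f \<in> borel_measurable (lborel \<Otimes>\<^sub>M lborel)"
    by (simp add: lborel_prod)
  from lborel.nn_integral_fst[OF this] show ?thesis
    by (simp add: lborel_prod)
qed

lemma nn_integral_lborel_pair_swap:
  fixes f :: "real \<times> real \<Rightarrow> ennreal"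
  assumes [measurable]: "f \<in> borel_measurable borel"
  shows "(\<integral>\<^sup>+z. f z \<partial>lborel) = (\<integral>\<^sup>+y. \<integral>\<^sup>+x. f (x, y) \<partial>lborel \<partial>lborel)"
proof -
  have "f \<in> borel_measurable (lborel \<Otimes>\<^sub>M lborel)"
    by (simp add: lborel_prod)
  from lborel_pair.nn_integral_snd[OF this] show ?thesis
    by (simp add: lborel_prod)
qed

lemma nn_integral_lborel_translate:
  fixes f :: "real \<times> real \<Rightarrow> ennreal"
  assumes [measurable]: "f \<in> borel_measurable borel"
  shows "(\<integral>\<^sup>+x. f x \<partial>lborel) = (\<integral>\<^sup>+x. f (c + x) \<partial>lborel)"
proof -
  have "(\<integral>\<^sup>+x. f x \<partial>lborel) = (\<integral>\<^sup>+x. f x \<partial>distr lborel borel ((+) c))"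
    by (simp add: lborel_distr_plus)
  also have "\<dots> = (\<integral>\<^sup>+x. f (c + x) \<partial>lborel)"
    by (subst nn_integral_distr) auto
  finally show ?thesis .
qed

lemma nn_integral_lborel_scale:
  fixes f :: "real \<times> real \<Rightarrow> ennreal"
  assumes [measurable]: "f \<in> borel_measurable borel" and h: "h1 > 0" "h2 > 0"
  shows "(\<integral>\<^sup>+z. f z \<partial>lborel) = ennreal (h1 * h2) * (\<integral>\<^sup>+z. f (h1 * fst z, h2 * snd z) \<partial>lborel)"
proof -
  have "(\<lambda>z. (h1 * fst z, h2 * snd z)) \<in> borel \<rightarrow>\<^sub>M borel"
    by (intro borel_measurable_continuous_onI continuous_intros)
  then have [measurable]: "(\<lambda>z. f (h1 * fst z, h2 * snd z)) \<in> borel_measurable borel"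
    using measurable_compose assms(1) by blast
  have "(\<integral>\<^sup>+z. f z \<partial>lborel) = (\<integral>\<^sup>+x. \<integral>\<^sup>+y. f (x, y) \<partial>lborel \<partial>lborel)"
    by (rule nn_integral_lborel_pair) simp
  also have "\<dots> = (\<integral>\<^sup>+x. ennreal h2 * \<integral>\<^sup>+y. f (x, h2 * y) \<partial>lborel \<partial>lborel)"
    using h by (intro nn_integral_cong) (subst nn_integral_real_affine[where c=h2 and t=0]; simp)
  also have "\<dots> = ennreal h2 * (\<integral>\<^sup>+x. \<integral>\<^sup>+y. f (x, h2 * y) \<partial>lborel \<partial>lborel)"
    by (rule nn_integral_cmult) simp
  also have "(\<integral>\<^sup>+x. \<integral>\<^sup>+y. f (x, h2 * y) \<partial>lborel \<partial>lborel)
      = ennreal h1 * (\<integral>\<^sup>+x. \<integral>\<^sup>+y. f (h1 * x, h2 * y) \<partial>lborel \<partial>lborel)"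
    using h by (subst nn_integral_real_affine[where c=h1 and t=0]) auto
  also have "(\<integral>\<^sup>+x. \<integral>\<^sup>+y. f (h1 * x, h2 * y) \<partial>lborel \<partial>lborel)
      = (\<integral>\<^sup>+z. f (h1 * fst z, h2 * snd z) \<partial>lborel)"
    by (subst nn_integral_lborel_pair) simp_all
  finally show ?thesis using h by (simp add: ennreal_mult mult_ac)
qed

lemma AE_lborel_not_on_hyperplane:
  fixes a :: "real \<times> real"
  assumes a: "a \<noteq> 0"
  shows "AE x in lborel. a \<bullet> x \<noteq> b"
proof -
  have "negligible {x. a \<bullet> x = b}"
    using negligible_hyperplane a by blast
  then have "{x. a \<bullet> x = b} \<in> null_sets lebesgue"
    by (simp add: negligible_iff_null_sets)
  moreover have "{x. a \<bullet> x = b} \<in> sets lborel"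
    using closed_hyperplane[of a b] by simp
  ultimately have "{x. a \<bullet> x = b} \<in> null_sets lborel"
    using null_sets_completion_iff by blast
  then have "AE x in lborel. x \<notin> {x. a \<bullet> x = b}"
    by (rule AE_not_in)
  then show ?thesis
    by simp
qed

lemma borel_measurable_indicator_continuous:
  fixes g :: "'a::topological_space \<Rightarrow> 'b::topological_space"
  assumes "continuous_on UNIV g" "S \<in> sets borel"
  shows "(\<lambda>x. indicator S (g x) :: ennreal) \<in> borel_measurable borel"
proof -
  have "g \<in> borel \<rightarrow>\<^sub>M borel"
    by (rule borel_measurable_continuous_onI[OF assms(1)])
  moreover have "(indicator S :: 'b \<Rightarrow> ennreal) \<in> borel_measurable borel"
    using assms(2) by simp
  ultimately show ?thesis
    using measurable_compose by blast
qed

lemma nn_integral_count_space_single: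
  assumes "\<And>c. c \<in> A \<Longrightarrow> c \<noteq> c0 \<Longrightarrow> f c = 0"
  shows "(\<integral>\<^sup>+c. f c \<partial>count_space A) = (if c0 \<in> A then f c0 else 0)"
proof (cases "c0 \<in> A")
  case True
  then show ?thesis using nn_integral_count_space'[of "{c0}" A f] assms by auto
next
  case False
  then show ?thesis using nn_integral_count_space'[of "{}" A f] assms by auto
qed

lemma nn_integral_count_space_mono_set:
  "A \<subseteq> B \<Longrightarrow> (\<integral>\<^sup>+c. f c \<partial>count_space A) \<le> (\<integral>\<^sup>+c. f c \<partial>count_space B)"
  by (simp add: nn_integral_count_space_indicator nn_integral_mono split: split_indicator)
     (auto intro!: nn_integral_mono split: split_indicator)

lemma nn_integral_count_space_translate:
  fixes k :: "'a::group_add"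
  shows "(\<integral>\<^sup>+c. g (c + k) \<partial>count_space A) = (\<integral>\<^sup>+z. g z \<partial>count_space ((\<lambda>c. c + k) ` A))"
  by (rule nn_integral_bij_count_space) (auto simp: bij_betw_def inj_on_def)

section \<open>Piecewise linear interpolation on the integer lattice\<close>

text \<open>The nodal basis function at the origin of the triangulation of the plane by the lines
  \<open>x\<^sub>1 \<in> \<int>\<close>, \<open>x\<^sub>2 \<in> \<int>\<close> and \<open>x\<^sub>1 - x\<^sub>2 \<in> \<int>\<close>; rescaled, these triangles are the
  \<open>T\<^sup>1\<close>, \<open>T\<^sup>2\<close> of the mesh.\<close>

definition hat :: "real \<Rightarrow> real \<Rightarrow> real" where
  "hat a b = max 0 (1 - max \<bar>a\<bar> (max \<bar>b\<bar> \<bar>a - b\<bar>))"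

text \<open>The sum runs over the only lattice points whose hat function can be nonzero at \<open>(s, t)\<close>.\<close>

definition pl_interp :: "(int \<times> int \<Rightarrow> real) \<Rightarrow> real \<Rightarrow> real \<Rightarrow> real" where
  "pl_interp U s t = (\<Sum>(i, j) \<in> {\<lfloor>s\<rfloor>-1..\<lfloor>s\<rfloor>+1} \<times> {\<lfloor>t\<rfloor>-1..\<lfloor>t\<rfloor>+1}.
     U (i, j) * hat (s - of_int i) (t - of_int j))"

lemma hat_nonneg: "hat a b \<ge> 0"
  by (simp add: hat_def)

lemma hat_nonzero_imp: "hat a b \<noteq> 0 \<Longrightarrow> \<bar>a\<bar> < 1 \<and> \<bar>b\<bar> < 1"
  by (auto simp: hat_def max_def split: if_splits)

lemma hat_tri1:
  assumes "0 \<le> b" "b \<le> a" "a \<le> 1"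
  shows "hat a b = 1 - a" "hat (a - 1) b = a - b" "hat a (b - 1) = 0" "hat (a - 1) (b - 1) = b"
  using assms unfolding hat_def by (simp_all add: max_def abs_if)

lemma hat_tri2:
  assumes "0 \<le> a" "a \<le> b" "b \<le> 1"
  shows "hat a b = 1 - b" "hat (a - 1) b = 0" "hat a (b - 1) = b - a" "hat (a - 1) (b - 1) = a"
  using assms unfolding hat_def by (simp_all add: max_def abs_if)

lemma pl_interp_eq_sum:
  assumes F: "finite F" and supp: "\<And>i j. hat (s - of_int i) (t - of_int j) \<noteq> 0 \<Longrightarrow> (i, j) \<in> F"
  shows "pl_interp U s t = (\<Sum>(i, j) \<in> F. U (i, j) * hat (s - of_int i) (t - of_int j))"
proof -
  let ?N = "{\<lfloor>s\<rfloor>-1..\<lfloor>s\<rfloor>+1} \<times> {\<lfloor>t\<rfloor>-1..\<lfloor>t\<rfloor>+1}"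
  let ?g = "\<lambda>(i, j). U (i, j) * hat (s - of_int i) (t - of_int j)"
  have N: "\<lfloor>s\<rfloor> - 1 \<le> i \<and> i \<le> \<lfloor>s\<rfloor> + 1 \<and> \<lfloor>t\<rfloor> - 1 \<le> j \<and> j \<le> \<lfloor>t\<rfloor> + 1"
    if "hat (s - of_int i) (t - of_int j) \<noteq> 0" for i j
  proof -
    from hat_nonzero_imp[OF that] have "\<bar>s - of_int i\<bar> < 1" "\<bar>t - of_int j\<bar> < 1"
      by auto
    then show ?thesis
      by (auto simp: abs_less_iff) linarith+
  qed
  have "sum ?g ?N = sum ?g (?N \<inter> F)"
    by (rule sum.mono_neutral_right) (auto dest: supp)
  also have "\<dots> = sum ?g F"
    by (rule sum.mono_neutral_left) (auto simp: F dest: N)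
  finally show ?thesis
    by (simp add: pl_interp_def)
qed

lemma pl_interp_cell:
  assumes a: "0 \<le> a" "a \<le> 1" and b: "0 \<le> b" "b \<le> 1"
  shows "pl_interp U (of_int i + a) (of_int j + b) = U (i, j) * hat a b + U (i+1, j) * hat (a - 1) b
     + U (i, j+1) * hat a (b - 1) + U (i+1, j+1) * hat (a - 1) (b - 1)"
proof -
  have "(i', j') \<in> {(i, j), (i+1, j), (i, j+1), (i+1, j+1)}"
    if "hat (of_int i + a - of_int i') (of_int j + b - of_int j') \<noteq> 0" for i' j'
  proof -
    from hat_nonzero_imp[OF that]
    have "\<bar>a - of_int (i' - i)\<bar> < 1" "\<bar>b - of_int (j' - j)\<bar> < 1"
      by (simp_all add: algebra_simps)
    then have "-1 < i' - i" "i' - i < 2" "-1 < j' - j" "j' - j < 2"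
      using a b by (auto simp: abs_less_iff)
    then show ?thesis
      by auto
  qed
  then have "pl_interp U (of_int i + a) (of_int j + b)
      = (\<Sum>(i', j') \<in> {(i, j), (i+1, j), (i, j+1), (i+1, j+1)}.
           U (i', j') * hat (of_int i + a - of_int i') (of_int j + b - of_int j'))"
    by (intro pl_interp_eq_sum) auto
  then show ?thesis
    by (simp add: algebra_simps)
qed

lemma pl_interp_tri1:
  assumes "0 \<le> b" "b \<le> a" "a \<le> 1"
  shows "pl_interp U (of_int i + a) (of_int j + b) = U (i, j) * (1 - a) + U (i+1, j) * (a - b) + U (i+1, j+1) * b"
  using pl_interp_cell[of a b U i j] hat_tri1[OF assms] assms by simp

lemma pl_interp_tri2:
  assumes "0 \<le> a" "a \<le> b" "b \<le> 1"
  shows "pl_interp U (of_int i + a) (of_int j + b) = U (i, j) * (1 - b) + U (i, j+1) * (b - a) + U (i+1, j+1) * a"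
  using pl_interp_cell[of a b U i j] hat_tri2[OF assms] assms by simp

lemma pl_interp_lattice: "pl_interp U (of_int i) (of_int j) = U (i, j)"
  using pl_interp_tri1[of 0 0 U i j] by simp

lemma pl_interp_nonneg: "(\<And>z. U z \<ge> 0) \<Longrightarrow> pl_interp U s t \<ge> 0"
  unfolding pl_interp_def by (intro sum_nonneg) (auto intro!: mult_nonneg_nonneg hat_nonneg)

lemma continuous_pl_interp: "continuous_on UNIV (\<lambda>x. pl_interp U (fst x) (snd x))"
proof -
  have "isCont (\<lambda>x. pl_interp U (fst x) (snd x)) x0" for x0 :: "real \<times> real"
  proof -
    let ?F = "{\<lfloor>fst x0\<rfloor>-2..\<lfloor>fst x0\<rfloor>+2} \<times> {\<lfloor>snd x0\<rfloor>-2..\<lfloor>snd x0\<rfloor>+2}"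
    let ?g = "\<lambda>x. \<Sum>(i, j) \<in> ?F. U (i, j) * hat (fst x - of_int i) (snd x - of_int j)"
    have "continuous_on UNIV ?g"
      unfolding case_prod_beta hat_def by (intro continuous_intros)
    then have g: "continuous (at x0 within UNIV) ?g"
      using continuous_on_eq_continuous_within by blast
    have local_eq: "?g x = pl_interp U (fst x) (snd x)" if "dist x x0 < 1" for x
    proof (rule pl_interp_eq_sum[symmetric])
      have d: "\<bar>fst x - fst x0\<bar> < 1" "\<bar>snd x - snd x0\<bar> < 1"
        using that dist_fst_le[of x x0] dist_snd_le[of x x0] by (auto simp: dist_real_def)
      fix i j
      assume "hat (fst x - of_int i) (snd x - of_int j) \<noteq> 0"
      from hat_nonzero_imp[OF this] d
      have "\<bar>fst x0 - of_int i\<bar> < 2" "\<bar>snd x0 - of_int j\<bar> < 2"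
        by (auto simp: abs_less_iff)
      then show "(i, j) \<in> ?F"
        by (auto simp: abs_less_iff) linarith+
    qed simp
    have "continuous (at x0 within UNIV) (\<lambda>x. pl_interp U (fst x) (snd x))"
      by (rule continuous_transform_within[OF g zero_less_one UNIV_I]) (rule local_eq)
    then show ?thesis
      by simp
  qed
  then show ?thesis
    by (simp add: continuous_at_imp_continuous_on)
qed

definition mesh_interp :: "real \<Rightarrow> real \<Rightarrow> (int \<times> int \<Rightarrow> real) \<Rightarrow> real \<times> real \<Rightarrow> real" where
  "mesh_interp h1 h2 U x = pl_interp U (fst x / h1) (snd x / h2)"

lemma continuous_mesh_interp:
  assumes "h1 \<noteq> 0" "h2 \<noteq> 0"
  shows "continuous_on UNIV (mesh_interp h1 h2 U)"
proof -
  have "continuous_on UNIV ((\<lambda>x. pl_interp U (fst x) (snd x)) \<circ> (\<lambda>x. (fst x / h1, snd x / h2)))"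
    by (rule continuous_on_compose)
      (auto intro!: continuous_intros continuous_on_subset[OF continuous_pl_interp] simp: assms)
  then show ?thesis
    by (simp add: mesh_interp_def o_def)
qed

lemma mesh_interp_lattice: "h1 \<noteq> 0 \<Longrightarrow> h2 \<noteq> 0 \<Longrightarrow> mesh_interp h1 h2 U (h1 * of_int i, h2 * of_int j) = U (i, j)"
  by (simp add: mesh_interp_def pl_interp_lattice)

lemma affine_on_mesh_interp_tri1:
  assumes h: "h1 > 0" "h2 > 0"
  shows "affine_on (mesh_interp h1 h2 U) (tri1 h1 h2 z1 z2)"
proof -
  let ?c1 = "U (z1+1, z2) - U (z1, z2)" and ?c2 = "U (z1+1, z2+1) - U (z1+1, z2)"
  let ?c0 = "U (z1, z2) - ?c1 * of_int z1 - ?c2 * of_int z2"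
  have "mesh_interp h1 h2 U y = ?c0 + (?c1 / h1) * fst y + (?c2 / h2) * snd y"
    if "y \<in> tri1 h1 h2 z1 z2" for y
  proof -
    from that obtain p q r where pqr: "0 \<le> p" "0 \<le> q" "0 \<le> r" "p + q + r = 1"
      and y: "y = p *\<^sub>R (h1 * of_int z1, h2 * of_int z2) + q *\<^sub>R (h1 * of_int z1 + h1, h2 * of_int z2)
                + r *\<^sub>R (h1 * of_int z1 + h1, h2 * of_int z2 + h2)"
      unfolding tri1_def convex_hull_3 by blast
    have p: "p = 1 - q - r"
      using pqr by simp
    have y1: "fst y / h1 = of_int z1 + (q + r)" and y2: "snd y / h2 = of_int z2 + r"
      using h unfolding y p by (simp_all add: field_simps)
    have "mesh_interp h1 h2 U y = U (z1, z2) * (1 - (q+r)) + U (z1+1, z2) * ((q+r) - r) + U (z1+1, z2+1) * r"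
      unfolding mesh_interp_def y1 y2 by (rule pl_interp_tri1) (use pqr in auto)
    also have "\<dots> = ?c0 + (?c1 / h1) * fst y + (?c2 / h2) * snd y"
    proof -
      have "fst y = h1 * (of_int z1 + (q + r))" "snd y = h2 * (of_int z2 + r)"
        using y1 y2 h by (simp_all add: field_simps)
      then show ?thesis
        using h by (simp add: field_simps)
    qed
    finally show ?thesis .
  qed
  then have "\<forall>y \<in> tri1 h1 h2 z1 z2. mesh_interp h1 h2 U y = ?c0 + (?c1 / h1) * fst y + (?c2 / h2) * snd y"
    by blast
  then show ?thesis
    unfolding affine_on_def by blast
qed

lemma affine_on_mesh_interp_tri2:
  assumes h: "h1 > 0" "h2 > 0"
  shows "affine_on (mesh_interp h1 h2 U) (tri2 h1 h2 z1 z2)"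
proof -
  let ?c1 = "U (z1+1, z2+1) - U (z1, z2+1)" and ?c2 = "U (z1, z2+1) - U (z1, z2)"
  let ?c0 = "U (z1, z2) - ?c1 * of_int z1 - ?c2 * of_int z2"
  have "mesh_interp h1 h2 U y = ?c0 + (?c1 / h1) * fst y + (?c2 / h2) * snd y"
    if "y \<in> tri2 h1 h2 z1 z2" for y
  proof -
    from that obtain p q r where pqr: "0 \<le> p" "0 \<le> q" "0 \<le> r" "p + q + r = 1"
      and y: "y = p *\<^sub>R (h1 * of_int z1, h2 * of_int z2) + q *\<^sub>R (h1 * of_int z1, h2 * of_int z2 + h2)
                + r *\<^sub>R (h1 * of_int z1 + h1, h2 * of_int z2 + h2)"
      unfolding tri2_def convex_hull_3 by blast
    have p: "p = 1 - q - r"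
      using pqr by simp
    have y1: "fst y / h1 = of_int z1 + r" and y2: "snd y / h2 = of_int z2 + (q + r)"
      using h unfolding y p by (simp_all add: field_simps)
    have "mesh_interp h1 h2 U y = U (z1, z2) * (1 - (q+r)) + U (z1, z2+1) * ((q+r) - r) + U (z1+1, z2+1) * r"
      unfolding mesh_interp_def y1 y2 by (rule pl_interp_tri2) (use pqr in auto)
    also have "\<dots> = ?c0 + (?c1 / h1) * fst y + (?c2 / h2) * snd y"
    proof -
      have "fst y = h1 * (of_int z1 + r)" "snd y = h2 * (of_int z2 + (q + r))"
        using y1 y2 h by (simp_all add: field_simps)
      then show ?thesis
        using h by (simp add: field_simps)
    qed
    finally show ?thesis .
  qed
  then have "\<forall>y \<in> tri2 h1 h2 z1 z2. mesh_interp h1 h2 U y = ?c0 + (?c1 / h1) * fst y + (?c2 / h2) * snd y"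
    by blast
  then show ?thesis
    unfolding affine_on_def by blast
qed

lemma mesh_interp_right_deriv1:
  assumes h: "h1 > 0" "h2 > 0"
  shows "((\<lambda>t. mesh_interp h1 h2 U (h1 * of_int z1 + t, h2 * of_int z2)) has_real_derivative
           (U (z1+1, z2) - U (z1, z2)) / h1) (at_right 0)"
proof -
  let ?g = "\<lambda>t. U (z1, z2) + (U (z1+1, z2) - U (z1, z2)) * (t / h1)"
  have lin: "(?g has_real_derivative (U (z1+1, z2) - U (z1, z2)) / h1) (at 0 within {0..})"
    using h by (auto intro!: derivative_eq_intros)
  have eq: "?g t = mesh_interp h1 h2 U (h1 * of_int z1 + t, h2 * of_int z2)"
    if "t \<in> {0..}" "dist t 0 < h1" for t
  proof -
    have "(h1 * of_int z1 + t) / h1 = of_int z1 + t / h1" "h2 * of_int z2 / h2 = of_int z2 + 0"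
      using h by (simp_all add: add_divide_distrib)
    moreover have "0 \<le> t / h1" "t / h1 \<le> 1"
      using that h by (auto simp: dist_real_def)
    ultimately show ?thesis
      using pl_interp_tri1[of 0 "t / h1" U z1 z2] by (simp add: mesh_interp_def algebra_simps)
  qed
  have "((\<lambda>t. mesh_interp h1 h2 U (h1 * of_int z1 + t, h2 * of_int z2)) has_real_derivative
           (U (z1+1, z2) - U (z1, z2)) / h1) (at 0 within {0..})"
    by (rule has_field_derivative_transform_within[OF lin, of h1]) (use h eq in auto)
  then show ?thesis
    by (rule has_field_derivative_subset) auto
qed

lemma mesh_interp_right_deriv2:
  assumes h: "h1 > 0" "h2 > 0"
  shows "((\<lambda>t. mesh_interp h1 h2 U (h1 * of_int z1, h2 * of_int z2 + t)) has_real_derivative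
           (U (z1, z2+1) - U (z1, z2)) / h2) (at_right 0)"
proof -
  let ?g = "\<lambda>t. U (z1, z2) + (U (z1, z2+1) - U (z1, z2)) * (t / h2)"
  have lin: "(?g has_real_derivative (U (z1, z2+1) - U (z1, z2)) / h2) (at 0 within {0..})"
    using h by (auto intro!: derivative_eq_intros)
  have eq: "?g t = mesh_interp h1 h2 U (h1 * of_int z1, h2 * of_int z2 + t)"
    if "t \<in> {0..}" "dist t 0 < h2" for t
  proof -
    have "(h2 * of_int z2 + t) / h2 = of_int z2 + t / h2" "h1 * of_int z1 / h1 = of_int z1 + 0"
      using h by (simp_all add: add_divide_distrib)
    moreover have "0 \<le> t / h2" "t / h2 \<le> 1"
      using that h by (auto simp: dist_real_def)
    ultimately show ?thesis
      using pl_interp_tri2[of 0 "t / h2" U z1 z2] by (simp add: mesh_interp_def algebra_simps)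
  qed
  have "((\<lambda>t. mesh_interp h1 h2 U (h1 * of_int z1, h2 * of_int z2 + t)) has_real_derivative
           (U (z1, z2+1) - U (z1, z2)) / h2) (at 0 within {0..})"
    by (rule has_field_derivative_transform_within[OF lin, of h2]) (use h eq in auto)
  then show ?thesis
    by (rule has_field_derivative_subset) auto
qed

section \<open>The gradient of the interpolant\<close>

definition lattice_lines :: "(real \<times> real) set" where
  "lattice_lines = {z. \<exists>k::int. fst z = of_int k \<or> snd z = of_int k \<or> fst z - snd z = of_int k}"

lemma AE_lborel_scaled_not_lattice_lines:
  assumes h: "h1 \<noteq> 0" "h2 \<noteq> 0"
  shows "AE x in lborel. (fst x / h1, snd x / h2) \<notin> lattice_lines"
proof -
  have "AE x in lborel. \<forall>k::int. fst x / h1 \<noteq> of_int k \<and> snd x / h2 \<noteq> of_int k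
                                  \<and> fst x / h1 - snd x / h2 \<noteq> of_int k"
  proof (subst AE_all_countable, intro allI)
    fix k :: int
    have "AE x::real \<times> real in lborel. (1 / h1, 0) \<bullet> x \<noteq> of_int k"
         "AE x::real \<times> real in lborel. (0, 1 / h2) \<bullet> x \<noteq> of_int k"
         "AE x::real \<times> real in lborel. (1 / h1, - 1 / h2) \<bullet> x \<noteq> of_int k"
      using h by (auto intro!: AE_lborel_not_on_hyperplane simp: zero_prod_def)
    then show "AE x in lborel. fst x / h1 \<noteq> of_int k \<and> snd x / h2 \<noteq> of_int k
                               \<and> fst x / h1 - snd x / h2 \<noteq> of_int k"
      by eventually_elim (auto simp: inner_prod_def)
  qed
  then show ?thesis
    by eventually_elim (auto simp: lattice_lines_def)
qed

lemma not_lattice_lines_floor: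
  assumes "z \<notin> lattice_lines"
  shows "of_int \<lfloor>fst z\<rfloor> < fst z" "fst z < of_int \<lfloor>fst z\<rfloor> + 1"
    and "of_int \<lfloor>snd z\<rfloor> < snd z" "snd z < of_int \<lfloor>snd z\<rfloor> + 1"
    and "snd z - of_int \<lfloor>snd z\<rfloor> \<noteq> fst z - of_int \<lfloor>fst z\<rfloor>"
proof -
  have "fst z \<noteq> of_int \<lfloor>fst z\<rfloor>" "snd z \<noteq> of_int \<lfloor>snd z\<rfloor>"
    and "fst z - snd z \<noteq> of_int (\<lfloor>fst z\<rfloor> - \<lfloor>snd z\<rfloor>)"
    using assms unfolding lattice_lines_def by blast+
  then show "of_int \<lfloor>fst z\<rfloor> < fst z" "fst z < of_int \<lfloor>fst z\<rfloor> + 1"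
    and "of_int \<lfloor>snd z\<rfloor> < snd z" "snd z < of_int \<lfloor>snd z\<rfloor> + 1"
    and "snd z - of_int \<lfloor>snd z\<rfloor> \<noteq> fst z - of_int \<lfloor>fst z\<rfloor>"
    by (simp_all, linarith+)
qed

definition lattice_diff1 :: "(int \<times> int \<Rightarrow> real) \<Rightarrow> real \<Rightarrow> int \<times> int \<Rightarrow> real" where
  "lattice_diff1 U h1 z = (U (fst z + 1, snd z) - U z) / h1"

definition lattice_diff2 :: "(int \<times> int \<Rightarrow> real) \<Rightarrow> real \<Rightarrow> int \<times> int \<Rightarrow> real" where
  "lattice_diff2 U h2 z = (U (fst z, snd z + 1) - U z) / h2"

text \<open>The gradient of \<open>mesh_interp h1 h2 U\<close> at \<open>x\<close>, expressed through \<open>z = (x\<^sub>1/h\<^sub>1, x\<^sub>2/h\<^sub>2)\<close>: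
  off the lattice lines \<open>z\<close> lies in the interior of a unique triangle, on which the interpolant is
  affine with slopes given by the differences along two of its edges. The value \<open>(0, 0)\<close> on the
  lattice lines is arbitrary: they form a null set.\<close>

definition pl_grad :: "(int \<times> int \<Rightarrow> real) \<Rightarrow> real \<Rightarrow> real \<Rightarrow> real \<times> real \<Rightarrow> real \<times> real" where
  "pl_grad U h1 h2 z = (let i = \<lfloor>fst z\<rfloor>; j = \<lfloor>snd z\<rfloor> in
     if z \<in> lattice_lines then (0, 0)
     else if snd z - of_int j < fst z - of_int i
     then (lattice_diff1 U h1 (i, j), lattice_diff2 U h2 (i+1, j))
     else (lattice_diff1 U h1 (i, j+1), lattice_diff2 U h2 (i, j)))"

lemma mesh_interp_has_derivative:
  assumes h: "h1 > 0" "h2 > 0" and x: "(fst x / h1, snd x / h2) \<notin> lattice_lines"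
  shows "(mesh_interp h1 h2 U has_derivative (\<lambda>k. pl_grad U h1 h2 (fst x / h1, snd x / h2) \<bullet> k)) (at x)"
proof -
  define s where "s = fst x / h1"
  define t where "t = snd x / h2"
  define i where "i = \<lfloor>s\<rfloor>"
  define j where "j = \<lfloor>t\<rfloor>"
  have st: "(s, t) \<notin> lattice_lines"
    using x by (simp add: s_def t_def)
  have ij: "of_int i < s" "s < of_int i + 1" "of_int j < t" "t < of_int j + 1"
    "t - of_int j \<noteq> s - of_int i"
    using not_lattice_lines_floor[OF st] by (simp_all add: i_def j_def)
  let ?c = "\<lambda>y. fst y / h1 - of_int i" and ?d = "\<lambda>y. snd y / h2 - of_int j"
  show ?thesis
  proof (cases "t - of_int j < s - of_int i")
    case True
    let ?O = "{y. 0 < ?c y \<and> ?c y < 1 \<and> 0 < ?d y \<and> ?d y < 1 \<and> ?d y < ?c y}"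
    let ?g = "\<lambda>y. U (i, j) * (1 - ?c y) + U (i+1, j) * (?c y - ?d y) + U (i+1, j+1) * ?d y"
    have O: "open ?O"
      by (intro open_Collect_conj open_Collect_less continuous_intros) (use h in auto)
    have xO: "x \<in> ?O"
      using ij True by (simp add: s_def t_def)
    have eq: "?g y = mesh_interp h1 h2 U y" if "y \<in> ?O" for y
      using pl_interp_tri1[of "?d y" "?c y" U i j] that by (simp add: mesh_interp_def)
    have "pl_grad U h1 h2 (s, t) = ((U (i+1, j) - U (i, j)) / h1, (U (i+1, j+1) - U (i+1, j)) / h2)"
      using st True by (simp add: pl_grad_def lattice_diff1_def lattice_diff2_def i_def j_def Let_def)
    then have "(?g has_derivative (\<lambda>k. pl_grad U h1 h2 (s, t) \<bullet> k)) (at x)"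
      using h by (auto intro!: derivative_eq_intros ext simp: inner_prod_def algebra_simps diff_divide_distrib)
    from has_derivative_transform_within_open[OF this O xO eq] show ?thesis
      by (simp add: s_def t_def)
  next
    case False
    then have F: "s - of_int i < t - of_int j"
      using ij by linarith
    let ?O = "{y. 0 < ?c y \<and> ?c y < 1 \<and> 0 < ?d y \<and> ?d y < 1 \<and> ?c y < ?d y}"
    let ?g = "\<lambda>y. U (i, j) * (1 - ?d y) + U (i, j+1) * (?d y - ?c y) + U (i+1, j+1) * ?c y"
    have O: "open ?O"
      by (intro open_Collect_conj open_Collect_less continuous_intros) (use h in auto)
    have xO: "x \<in> ?O"
      using ij F by (simp add: s_def t_def)
    have eq: "?g y = mesh_interp h1 h2 U y" if "y \<in> ?O" for y
      using pl_interp_tri2[of "?c y" "?d y" U i j] that by (simp add: mesh_interp_def)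
    have "pl_grad U h1 h2 (s, t) = ((U (i+1, j+1) - U (i, j+1)) / h1, (U (i, j+1) - U (i, j)) / h2)"
      using st False by (simp add: pl_grad_def lattice_diff1_def lattice_diff2_def i_def j_def Let_def)
    then have "(?g has_derivative (\<lambda>k. pl_grad U h1 h2 (s, t) \<bullet> k)) (at x)"
      using h by (auto intro!: derivative_eq_intros ext simp: inner_prod_def algebra_simps diff_divide_distrib)
    from has_derivative_transform_within_open[OF this O xO eq] show ?thesis
      by (simp add: s_def t_def)
  qed
qed

section \<open>Integrals over the reference triangles\<close>

definition ref_tri1 :: "(real \<times> real) set" where
  "ref_tri1 = {z. 0 \<le> snd z \<and> snd z \<le> fst z \<and> fst z \<le> 1}"

definition ref_tri2 :: "(real \<times> real) set" where
  "ref_tri2 = {z. 0 \<le> fst z \<and> fst z \<le> snd z \<and> snd z \<le> 1}"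

lemma ref_tri1_borel [measurable]: "ref_tri1 \<in> sets borel"
proof -
  have "closed ref_tri1"
    unfolding ref_tri1_def by (intro closed_Collect_conj closed_Collect_le continuous_intros)
  then show ?thesis
    by simp
qed

lemma ref_tri2_borel [measurable]: "ref_tri2 \<in> sets borel"
proof -
  have "closed ref_tri2"
    unfolding ref_tri2_def by (intro closed_Collect_conj closed_Collect_le continuous_intros)
  then show ?thesis
    by simp
qed

lemma nn_integral_Icc_power:
  fixes a b :: real
  assumes "a \<le> b"
  shows "(\<integral>\<^sup>+y. ennreal ((y - a) ^ p) * indicator {a..b} y \<partial>lborel) = ennreal ((b - a) ^ (p+1) / (p+1))"
    and "(\<integral>\<^sup>+y. ennreal ((b - y) ^ p) * indicator {a..b} y \<partial>lborel) = ennreal ((b - a) ^ (p+1) / (p+1))"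
proof -
  have "(\<integral>\<^sup>+y. ennreal ((y - a) ^ p) * indicator {a..b} y \<partial>lborel)
      = ennreal ((b - a) ^ (p+1) / (p+1) - (a - a) ^ (p+1) / (p+1))"
    using assms by (intro nn_integral_FTC_Icc[where F="\<lambda>y. (y - a) ^ (p+1) / (p+1)"])
      (auto intro!: derivative_eq_intros simp del: of_nat_Suc power_Suc)
  then show "(\<integral>\<^sup>+y. ennreal ((y - a) ^ p) * indicator {a..b} y \<partial>lborel) = ennreal ((b - a) ^ (p+1) / (p+1))"
    by simp
  have "(\<integral>\<^sup>+y. ennreal ((b - y) ^ p) * indicator {a..b} y \<partial>lborel)
      = ennreal (- ((b - b) ^ (p+1) / (p+1)) - - ((b - a) ^ (p+1) / (p+1)))"
    using assms by (intro nn_integral_FTC_Icc[where F="\<lambda>y. - ((b - y) ^ (p+1) / (p+1))"])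
      (auto intro!: derivative_eq_intros simp del: of_nat_Suc power_Suc)
  then show "(\<integral>\<^sup>+y. ennreal ((b - y) ^ p) * indicator {a..b} y \<partial>lborel) = ennreal ((b - a) ^ (p+1) / (p+1))"
    by simp
qed

lemma borel_measurable_ennreal_continuous:
  fixes g :: "'a::topological_space \<Rightarrow> real"
  assumes "continuous_on UNIV g"
  shows "(\<lambda>z. ennreal (g z)) \<in> borel_measurable borel"
  using borel_measurable_continuous_onI[OF assms] by measurable

lemma nn_integral_unit_interval_power_div:
  "(\<integral>\<^sup>+a. ennreal (a ^ (p+1) / (real p + 1)) * indicator {0..1} a \<partial>lborel)
     = ennreal (1 / ((real p + 1) * (real p + 2)))"
  "(\<integral>\<^sup>+a. ennreal ((1 - a) ^ (p+1) / (real p + 1)) * indicator {0..1} a \<partial>lborel)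
     = ennreal (1 / ((real p + 1) * (real p + 2)))"
proof -
  have factor: "ennreal (x / (real p + 1)) * indicator {0..1} a
      = ennreal (1 / (real p + 1)) * (ennreal x * indicator {0..1} a)" for x a :: real
  proof -
    have "ennreal (x / (real p + 1)) = ennreal (1 / (real p + 1)) * ennreal x"
      by (subst ennreal_mult' [symmetric]) auto
    then show ?thesis
      by (simp add: mult_ac)
  qed
  have product: "ennreal (1 / (real p + 1)) * ennreal (1 ^ (p+2) / real (p+2))
      = ennreal (1 / ((real p + 1) * (real p + 2)))"
    by (simp add: ennreal_mult [symmetric] algebra_simps)
  have "(\<integral>\<^sup>+a. ennreal ((a - 0) ^ (p+1) / (real p + 1)) * indicator {0..1} a \<partial>lborel)
      = ennreal (1 / (real p + 1)) * (\<integral>\<^sup>+a. ennreal ((a - 0) ^ (p+1)) * indicator {0..1} a \<partial>lborel)"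
    unfolding factor by (rule nn_integral_cmult) simp
  also have "\<dots> = ennreal (1 / ((real p + 1) * (real p + 2)))"
    using nn_integral_Icc_power(1)[of 0 1 "p+1"] product by (simp add: add_ac)
  finally show "(\<integral>\<^sup>+a. ennreal (a ^ (p+1) / (real p + 1)) * indicator {0..1} a \<partial>lborel)
     = ennreal (1 / ((real p + 1) * (real p + 2)))"
    by simp
  have "(\<integral>\<^sup>+a. ennreal ((1 - a) ^ (p+1) / (real p + 1)) * indicator {0..1} a \<partial>lborel)
      = ennreal (1 / (real p + 1)) * (\<integral>\<^sup>+a. ennreal ((1 - a) ^ (p+1)) * indicator {0..1} a \<partial>lborel)"
    unfolding factor by (rule nn_integral_cmult) simp
  also have "\<dots> = ennreal (1 / ((real p + 1) * (real p + 2)))"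
    using nn_integral_Icc_power(2)[of 0 1 "p+1"] product by (simp add: add_ac)
  finally show "(\<integral>\<^sup>+a. ennreal ((1 - a) ^ (p+1) / (real p + 1)) * indicator {0..1} a \<partial>lborel)
     = ennreal (1 / ((real p + 1) * (real p + 2)))" .
qed

lemma nn_integral_ref_tri1_fst_slices:
  assumes [measurable]: "f \<in> borel_measurable borel"
  shows "(\<integral>\<^sup>+z. f z * indicator ref_tri1 z \<partial>lborel)
       = (\<integral>\<^sup>+a. (\<integral>\<^sup>+b. f (a, b) * indicator {0..a} b \<partial>lborel) * indicator {0..1} a \<partial>lborel)"
proof -
  have m: "(\<lambda>z. f z * indicator ref_tri1 z) \<in> borel_measurable borel"
    by measurable
  have "(\<integral>\<^sup>+z. f z * indicator ref_tri1 z \<partial>lborel)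
      = (\<integral>\<^sup>+a. \<integral>\<^sup>+b. f (a, b) * indicator {0..a} b * indicator {0..1} a \<partial>lborel \<partial>lborel)"
    by (subst nn_integral_lborel_pair[OF m]) (auto simp: ref_tri1_def intro!: nn_integral_cong split: split_indicator)
  then show ?thesis
    by (simp add: nn_integral_multc)
qed

lemma nn_integral_ref_tri1_snd_slices:
  assumes [measurable]: "f \<in> borel_measurable borel"
  shows "(\<integral>\<^sup>+z. f z * indicator ref_tri1 z \<partial>lborel)
       = (\<integral>\<^sup>+b. (\<integral>\<^sup>+a. f (a, b) * indicator {b..1} a \<partial>lborel) * indicator {0..1} b \<partial>lborel)"
proof -
  have m: "(\<lambda>z. f z * indicator ref_tri1 z) \<in> borel_measurable borel"
    by measurable
  have "(\<integral>\<^sup>+z. f z * indicator ref_tri1 z \<partial>lborel)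
      = (\<integral>\<^sup>+b. \<integral>\<^sup>+a. f (a, b) * indicator {b..1} a * indicator {0..1} b \<partial>lborel \<partial>lborel)"
    by (subst nn_integral_lborel_pair_swap[OF m]) (auto simp: ref_tri1_def intro!: nn_integral_cong split: split_indicator)
  then show ?thesis
    by (simp add: nn_integral_multc)
qed

lemma nn_integral_ref_tri2_snd_slices:
  assumes [measurable]: "f \<in> borel_measurable borel"
  shows "(\<integral>\<^sup>+z. f z * indicator ref_tri2 z \<partial>lborel)
       = (\<integral>\<^sup>+b. (\<integral>\<^sup>+a. f (a, b) * indicator {0..b} a \<partial>lborel) * indicator {0..1} b \<partial>lborel)"
proof -
  have m: "(\<lambda>z. f z * indicator ref_tri2 z) \<in> borel_measurable borel"
    by measurable
  have "(\<integral>\<^sup>+z. f z * indicator ref_tri2 z \<partial>lborel)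
      = (\<integral>\<^sup>+b. \<integral>\<^sup>+a. f (a, b) * indicator {0..b} a * indicator {0..1} b \<partial>lborel \<partial>lborel)"
    by (subst nn_integral_lborel_pair_swap[OF m]) (auto simp: ref_tri2_def intro!: nn_integral_cong split: split_indicator)
  then show ?thesis
    by (simp add: nn_integral_multc)
qed

lemma nn_integral_ref_tri1_pow_1_minus_fst:
  "(\<integral>\<^sup>+z. ennreal ((1 - fst z) ^ p) * indicator ref_tri1 z \<partial>lborel) = ennreal (1 / ((real p + 1) * (real p + 2)))"
proof -
  have "(\<integral>\<^sup>+z. ennreal ((1 - fst z) ^ p) * indicator ref_tri1 z \<partial>lborel)
      = (\<integral>\<^sup>+b. ennreal ((1 - b) ^ (p+1) / (real p + 1)) * indicator {0..1} b \<partial>lborel)"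
    by (subst nn_integral_ref_tri1_snd_slices[OF borel_measurable_ennreal_continuous], intro continuous_intros)
      (auto intro!: nn_integral_cong simp: nn_integral_Icc_power(2) split: split_indicator)
  also have "\<dots> = ennreal (1 / ((real p + 1) * (real p + 2)))"
    by (rule nn_integral_unit_interval_power_div)
  finally show ?thesis .
qed

lemma nn_integral_ref_tri1_pow_fst_minus_snd:
  "(\<integral>\<^sup>+z. ennreal ((fst z - snd z) ^ p) * indicator ref_tri1 z \<partial>lborel) = ennreal (1 / ((real p + 1) * (real p + 2)))"
proof -
  have "(\<integral>\<^sup>+z. ennreal ((fst z - snd z) ^ p) * indicator ref_tri1 z \<partial>lborel)
      = (\<integral>\<^sup>+a. ennreal (a ^ (p+1) / (real p + 1)) * indicator {0..1} a \<partial>lborel)"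
    using nn_integral_Icc_power(2)[of 0 _ p]
    by (subst nn_integral_ref_tri1_fst_slices[OF borel_measurable_ennreal_continuous], intro continuous_intros) (auto intro!: nn_integral_cong split: split_indicator)
  also have "\<dots> = ennreal (1 / ((real p + 1) * (real p + 2)))"
    by (rule nn_integral_unit_interval_power_div)
  finally show ?thesis .
qed

lemma nn_integral_ref_tri1_pow_snd:
  "(\<integral>\<^sup>+z. ennreal (snd z ^ p) * indicator ref_tri1 z \<partial>lborel) = ennreal (1 / ((real p + 1) * (real p + 2)))"
proof -
  have "(\<integral>\<^sup>+z. ennreal (snd z ^ p) * indicator ref_tri1 z \<partial>lborel)
      = (\<integral>\<^sup>+a. ennreal (a ^ (p+1) / (real p + 1)) * indicator {0..1} a \<partial>lborel)"
    using nn_integral_Icc_power(1)[of 0 _ p]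
    by (subst nn_integral_ref_tri1_fst_slices[OF borel_measurable_ennreal_continuous], intro continuous_intros) (auto intro!: nn_integral_cong split: split_indicator)
  also have "\<dots> = ennreal (1 / ((real p + 1) * (real p + 2)))"
    by (rule nn_integral_unit_interval_power_div)
  finally show ?thesis .
qed

lemma nn_integral_ref_tri2_pow_snd_minus_fst:
  "(\<integral>\<^sup>+z. ennreal ((snd z - fst z) ^ p) * indicator ref_tri2 z \<partial>lborel) = ennreal (1 / ((real p + 1) * (real p + 2)))"
proof -
  have "(\<integral>\<^sup>+z. ennreal ((snd z - fst z) ^ p) * indicator ref_tri2 z \<partial>lborel)
      = (\<integral>\<^sup>+b. ennreal (b ^ (p+1) / (real p + 1)) * indicator {0..1} b \<partial>lborel)"
    using nn_integral_Icc_power(2)[of 0 _ p]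
    by (subst nn_integral_ref_tri2_snd_slices[OF borel_measurable_ennreal_continuous], intro continuous_intros) (auto intro!: nn_integral_cong split: split_indicator)
  also have "\<dots> = ennreal (1 / ((real p + 1) * (real p + 2)))"
    by (rule nn_integral_unit_interval_power_div)
  finally show ?thesis .
qed

definition unit_cell :: "int \<times> int \<Rightarrow> (real \<times> real) set" where
  "unit_cell c = {x. of_int (fst c) \<le> fst x \<and> fst x \<le> of_int (fst c) + 1
                    \<and> of_int (snd c) \<le> snd x \<and> snd x \<le> of_int (snd c) + 1}"

lemma unit_cell_cbox: "unit_cell (i, j) = cbox (of_int i, of_int j) (of_int i + 1, of_int j + 1)"
  by (auto simp: unit_cell_def cbox_Pair_eq)

lemma unit_cell_borel [measurable]: "unit_cell c \<in> sets borel"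
  using unit_cell_cbox[of "fst c" "snd c"] by simp

lemma emeasure_unit_cell: "emeasure lborel (unit_cell c) = 1"
  using unit_cell_cbox[of "fst c" "snd c"]
  by (simp add: emeasure_lborel_cbox_eq Basis_prod_def inner_prod_def)

lemma borel_measurable_pl_interp [measurable]: "(\<lambda>x. pl_interp U (fst x) (snd x)) \<in> borel_measurable borel"
  by (rule borel_measurable_continuous_onI[OF continuous_pl_interp])

lemma add_power_le_power_add:
  fixes x y :: real
  assumes "0 \<le> x" "0 \<le> y" "p \<ge> 1"
  shows "x ^ p + y ^ p \<le> (x + y) ^ p"
proof -
  obtain q where q: "p = Suc q"
    using assms(3) by (cases p) auto
  have "x ^ q * x + y ^ q * y \<le> (x + y) ^ q * x + (x + y) ^ q * y"
    using assms by (intro add_mono mult_right_mono power_mono) auto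
  then show ?thesis
    by (simp add: q algebra_simps)
qed

lemma pl_interp_cell_power_le:
  assumes U: "\<And>z. U z \<ge> 0" and x: "x \<in> unit_cell (i, j)"
  shows "pl_interp U (fst x) (snd x) ^ p \<le> U (i, j) ^ p + U (i+1, j) ^ p + U (i, j+1) ^ p + U (i+1, j+1) ^ p"
proof -
  define a where "a = fst x - of_int i"
  define b where "b = snd x - of_int j"
  have ab: "0 \<le> a" "a \<le> 1" "0 \<le> b" "b \<le> 1"
    using x by (auto simp: unit_cell_def a_def b_def)
  have x_eq: "fst x = of_int i + a" "snd x = of_int j + b"
    by (simp_all add: a_def b_def)
  define M where "M = max (max (U (i, j)) (U (i+1, j))) (max (U (i, j+1)) (U (i+1, j+1)))"
  have M: "U (i, j) \<le> M" "U (i+1, j) \<le> M" "U (i, j+1) \<le> M" "U (i+1, j+1) \<le> M"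
    by (auto simp: M_def)
  have "pl_interp U (fst x) (snd x) \<le> M"
  proof (cases "b \<le> a")
    case True
    then have "pl_interp U (fst x) (snd x) = U (i, j) * (1 - a) + U (i+1, j) * (a - b) + U (i+1, j+1) * b"
      unfolding x_eq using ab by (intro pl_interp_tri1) auto
    also have "\<dots> \<le> M * (1 - a) + M * (a - b) + M * b"
      using ab True by (intro add_mono mult_right_mono M) auto
    finally show ?thesis
      by (simp add: algebra_simps)
  next
    case False
    then have "pl_interp U (fst x) (snd x) = U (i, j) * (1 - b) + U (i, j+1) * (b - a) + U (i+1, j+1) * a"
      unfolding x_eq using ab by (intro pl_interp_tri2) auto
    also have "\<dots> \<le> M * (1 - b) + M * (b - a) + M * a"
      using ab False by (intro add_mono mult_right_mono M) auto
    finally show ?thesis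
      by (simp add: algebra_simps)
  qed
  then have "pl_interp U (fst x) (snd x) ^ p \<le> M ^ p"
    by (rule power_mono[OF _ pl_interp_nonneg[OF U]])
  also have "M ^ p \<le> U (i, j) ^ p + U (i+1, j) ^ p + U (i, j+1) ^ p + U (i+1, j+1) ^ p"
    using U[of "(i, j)"] U[of "(i+1, j)"] U[of "(i, j+1)"] U[of "(i+1, j+1)"]
    unfolding M_def by (auto simp: max_def)
  finally show ?thesis .
qed

lemma nn_integral_cell_upper:
  assumes U: "\<And>z. U z \<ge> 0"
  shows "(\<integral>\<^sup>+x. ennreal (pl_interp U (fst x) (snd x) ^ p) * indicator (unit_cell (i, j)) x \<partial>lborel)
     \<le> ennreal (U (i, j) ^ p + U (i+1, j) ^ p + U (i, j+1) ^ p + U (i+1, j+1) ^ p)"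
proof -
  let ?M = "U (i, j) ^ p + U (i+1, j) ^ p + U (i, j+1) ^ p + U (i+1, j+1) ^ p"
  have "(\<integral>\<^sup>+x. ennreal (pl_interp U (fst x) (snd x) ^ p) * indicator (unit_cell (i, j)) x \<partial>lborel)
      \<le> (\<integral>\<^sup>+x. ennreal ?M * indicator (unit_cell (i, j)) x \<partial>lborel)"
    by (intro nn_integral_mono)
      (auto split: split_indicator intro!: ennreal_leI pl_interp_cell_power_le[OF U])
  also have "\<dots> = ennreal ?M"
    by (simp add: nn_integral_cmult_indicator emeasure_unit_cell)
  finally show ?thesis .
qed

lemma pl_interp_cell_power_ge:
  assumes U: "\<And>z. U z \<ge> 0" and p: "p \<ge> 1" and y: "y \<in> unit_cell (0, 0)"
  shows "U (i, j) ^ p * (indicator ref_tri1 y * (1 - fst y) ^ p)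
       + U (i+1, j) ^ p * (indicator ref_tri1 y * (fst y - snd y) ^ p)
       + U (i+1, j+1) ^ p * (indicator ref_tri1 y * snd y ^ p)
       + U (i, j+1) ^ p * (indicator ref_tri2 y * (snd y - fst y) ^ p)
     \<le> pl_interp U (of_int i + fst y) (of_int j + snd y) ^ p"
proof -
  define a where "a = fst y"
  define b where "b = snd y"
  have ab: "0 \<le> a" "a \<le> 1" "0 \<le> b" "b \<le> 1"
    using y by (auto simp: unit_cell_def a_def b_def)
  have power_term: "u ^ p * (ind * l ^ p) \<le> (u * f) ^ p"
    if "0 \<le> u" "0 \<le> f" "ind = 0 \<or> (ind = 1 \<and> f = l)" for u f l ind :: real
    using that by (auto simp: power_mult_distrib)
  have T1: "indicator ref_tri1 y = (0::real) \<or> (indicator ref_tri1 y = (1::real) \<and> 0 \<le> b \<and> b \<le> a \<and> a \<le> 1)"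
    by (auto simp: ref_tri1_def a_def b_def split: split_indicator)
  have T2: "indicator ref_tri2 y = (0::real) \<or> (indicator ref_tri2 y = (1::real) \<and> 0 \<le> a \<and> a \<le> b \<and> b \<le> 1)"
    by (auto simp: ref_tri2_def a_def b_def split: split_indicator)
  have "U (i, j) ^ p * (indicator ref_tri1 y * (1 - a) ^ p) \<le> (U (i, j) * hat a b) ^ p"
    "U (i+1, j) ^ p * (indicator ref_tri1 y * (a - b) ^ p) \<le> (U (i+1, j) * hat (a - 1) b) ^ p"
    "U (i+1, j+1) ^ p * (indicator ref_tri1 y * b ^ p) \<le> (U (i+1, j+1) * hat (a - 1) (b - 1)) ^ p"
    using U T1 hat_tri1 hat_nonneg by (auto intro!: power_term)
  moreover have "U (i, j+1) ^ p * (indicator ref_tri2 y * (b - a) ^ p) \<le> (U (i, j+1) * hat a (b - 1)) ^ p"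
    using U T2 hat_tri2 hat_nonneg by (auto intro!: power_term)
  moreover have "(U (i, j) * hat a b) ^ p + (U (i+1, j) * hat (a - 1) b) ^ p + (U (i, j+1) * hat a (b - 1)) ^ p
      + (U (i+1, j+1) * hat (a - 1) (b - 1)) ^ p \<le> pl_interp U (of_int i + a) (of_int j + b) ^ p"
    unfolding pl_interp_cell[OF ab] using U hat_nonneg p
    by (intro order.trans[OF _ add_power_le_power_add] add_mono order.refl add_power_le_power_add
        add_nonneg_nonneg mult_nonneg_nonneg)
  ultimately show ?thesis
    unfolding a_def b_def by linarith
qed

lemma nn_integral_scaled_weight:
  fixes l :: "real \<times> real \<Rightarrow> real" and T :: "(real \<times> real) set"
  assumes [measurable]: "l \<in> borel_measurable borel" "T \<in> sets borel" and "u \<ge> 0"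
    and weight: "(\<integral>\<^sup>+z. ennreal (l z ^ p) * indicator T z \<partial>lborel) = ennreal k"
  shows "(\<integral>\<^sup>+y. ennreal (u ^ p * (indicator T y * l y ^ p)) \<partial>lborel) = ennreal (u ^ p * k)"
proof -
  have "(\<integral>\<^sup>+y. ennreal (u ^ p * (indicator T y * l y ^ p)) \<partial>lborel)
      = (\<integral>\<^sup>+y. ennreal (u ^ p) * (ennreal (l y ^ p) * indicator T y) \<partial>lborel)"
    using \<open>u \<ge> 0\<close> by (intro nn_integral_cong) (auto simp: ennreal_mult' split: split_indicator)
  also have "\<dots> = ennreal (u ^ p) * ennreal k"
    unfolding weight[symmetric] by (rule nn_integral_cmult) measurable
  finally show ?thesis
    using \<open>u \<ge> 0\<close> by (simp add: ennreal_mult')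
qed

lemma nn_integral_cell_lower:
  assumes U: "\<And>z. U z \<ge> 0" and p: "p \<ge> 1"
  shows "ennreal ((U (i, j) ^ p + U (i+1, j) ^ p + U (i, j+1) ^ p + U (i+1, j+1) ^ p) / ((real p + 1) * (real p + 2)))
     \<le> (\<integral>\<^sup>+x. ennreal (pl_interp U (fst x) (snd x) ^ p) * indicator (unit_cell (i, j)) x \<partial>lborel)"
proof -
  define k where "k = 1 / ((real p + 1) * (real p + 2))"
  define c :: "real \<times> real" where "c = (of_int i, of_int j)"
  define r1 where "r1 y = U (i, j) ^ p * (indicator ref_tri1 y * (1 - fst y) ^ p)" for y
  define r2 where "r2 y = U (i+1, j) ^ p * (indicator ref_tri1 y * (fst y - snd y) ^ p)" for y
  define r3 where "r3 y = U (i+1, j+1) ^ p * (indicator ref_tri1 y * snd y ^ p)" for y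
  define r4 where "r4 y = U (i, j+1) ^ p * (indicator ref_tri2 y * (snd y - fst y) ^ p)" for y
  have r_nonneg: "0 \<le> r1 y" "0 \<le> r2 y" "0 \<le> r3 y" "0 \<le> r4 y" for y
    using U by (auto simp: r1_def r2_def r3_def r4_def ref_tri1_def ref_tri2_def split: split_indicator)
  have [measurable]: "(\<lambda>y::real \<times> real. fst y) \<in> borel_measurable borel" "(\<lambda>y::real \<times> real. snd y) \<in> borel_measurable borel"
    by (intro borel_measurable_continuous_onI continuous_intros)+
  have "(\<integral>\<^sup>+y. ennreal (r1 y + r2 y + r3 y + r4 y) \<partial>lborel)
      = (\<integral>\<^sup>+y. ennreal (r1 y) \<partial>lborel) + (\<integral>\<^sup>+y. ennreal (r2 y) \<partial>lborel)
      + (\<integral>\<^sup>+y. ennreal (r3 y) \<partial>lborel) + (\<integral>\<^sup>+y. ennreal (r4 y) \<partial>lborel)"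
  proof -
    have "(\<integral>\<^sup>+y. ennreal (r1 y + r2 y + r3 y + r4 y) \<partial>lborel)
        = (\<integral>\<^sup>+y. ennreal (r1 y) + ennreal (r2 y) + ennreal (r3 y) + ennreal (r4 y) \<partial>lborel)"
      using r_nonneg by (intro nn_integral_cong) (simp add: add_nonneg_nonneg del: ennreal_plus add: ennreal_plus[symmetric])
    then show ?thesis
      by (simp add: nn_integral_add r1_def r2_def r3_def r4_def)
  qed
  also have "\<dots> = ennreal (U (i, j) ^ p * k) + ennreal (U (i+1, j) ^ p * k)
      + ennreal (U (i+1, j+1) ^ p * k) + ennreal (U (i, j+1) ^ p * k)"
    unfolding r1_def r2_def r3_def r4_def k_def using U
    by (simp add: nn_integral_scaled_weight nn_integral_ref_tri1_pow_1_minus_fst nn_integral_ref_tri1_pow_fst_minus_snd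
        nn_integral_ref_tri1_pow_snd nn_integral_ref_tri2_pow_snd_minus_fst)
  also have "\<dots> = ennreal ((U (i, j) ^ p + U (i+1, j) ^ p + U (i, j+1) ^ p + U (i+1, j+1) ^ p) * k)"
  proof -
    have "0 \<le> U z ^ p * k" for z
      using U[of z] by (simp add: k_def)
    then show ?thesis
      by (simp add: ennreal_plus[symmetric] distrib_right add_nonneg_nonneg del: ennreal_plus)
  qed
  finally have lower: "ennreal ((U (i, j) ^ p + U (i+1, j) ^ p + U (i, j+1) ^ p + U (i+1, j+1) ^ p) * k)
      = (\<integral>\<^sup>+y. ennreal (r1 y + r2 y + r3 y + r4 y) \<partial>lborel)" ..
  also have "\<dots> \<le> (\<integral>\<^sup>+y. ennreal (pl_interp U (fst (c + y)) (snd (c + y)) ^ p) * indicator (unit_cell (i, j)) (c + y) \<partial>lborel)"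
  proof (rule nn_integral_mono)
    fix y :: "real \<times> real"
    show "ennreal (r1 y + r2 y + r3 y + r4 y)
        \<le> ennreal (pl_interp U (fst (c + y)) (snd (c + y)) ^ p) * indicator (unit_cell (i, j)) (c + y)"
    proof (cases "y \<in> unit_cell (0, 0)")
      case True
      then have "c + y \<in> unit_cell (i, j)"
        by (auto simp: unit_cell_def c_def)
      with pl_interp_cell_power_ge[of U p y i j, OF U p True] show ?thesis
        by (simp add: r1_def r2_def r3_def r4_def c_def ennreal_leI)
    next
      case False
      then have "y \<notin> ref_tri1" "y \<notin> ref_tri2"
        by (auto simp: unit_cell_def ref_tri1_def ref_tri2_def)
      then show ?thesis
        by (simp add: r1_def r2_def r3_def r4_def)
    qed
  qed
  also have "\<dots> = (\<integral>\<^sup>+x. ennreal (pl_interp U (fst x) (snd x) ^ p) * indicator (unit_cell (i, j)) x \<partial>lborel)"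
    by (rule nn_integral_lborel_translate[symmetric]) measurable
  finally show ?thesis
    by (simp add: k_def)
qed

lemma unit_cell_unique:
  assumes "z \<in> unit_cell c" "z \<notin> lattice_lines"
  shows "c = (\<lfloor>fst z\<rfloor>, \<lfloor>snd z\<rfloor>)"
proof -
  obtain i j where c: "c = (i, j)"
    by (cases c)
  have "of_int i \<le> fst z" "fst z \<le> of_int i + 1" "of_int j \<le> snd z" "snd z \<le> of_int j + 1"
    using assms(1) by (auto simp: unit_cell_def c)
  moreover have "fst z \<noteq> of_int i" "fst z \<noteq> of_int (i+1)" "snd z \<noteq> of_int j" "snd z \<noteq> of_int (j+1)"
    using assms(2) unfolding lattice_lines_def by blast+
  ultimately have "\<lfloor>fst z\<rfloor> = i" "\<lfloor>snd z\<rfloor> = j"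
    by (simp_all add: floor_unique)
  then show ?thesis
    by (simp add: c)
qed

lemma nn_integral_le_sum_unit_cells:
  fixes g :: "real \<times> real \<Rightarrow> ennreal"
  assumes [measurable]: "g \<in> borel_measurable borel"
    and cover: "\<And>z. z \<in> Om \<Longrightarrow> \<exists>c\<in>C. z \<in> unit_cell c"
  shows "(\<integral>\<^sup>+z. g z * indicator Om z \<partial>lborel)
     \<le> (\<integral>\<^sup>+c. \<integral>\<^sup>+z. g z * indicator (unit_cell c) z \<partial>lborel \<partial>count_space C)"
proof -
  have "g z * indicator Om z \<le> (\<integral>\<^sup>+c. g z * indicator (unit_cell c) z \<partial>count_space C)" for z
  proof (cases "z \<in> Om")
    case True
    then obtain c where c: "c \<in> C" "z \<in> unit_cell c"
      using cover by blast
    then have "g z * indicator Om z = g z * indicator (unit_cell c) z"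
      using True by simp
    also have "\<dots> \<le> (\<integral>\<^sup>+c. g z * indicator (unit_cell c) z \<partial>count_space C)"
      by (rule nn_integral_ge_point[OF c(1)])
    finally show ?thesis .
  qed simp
  then have "(\<integral>\<^sup>+z. g z * indicator Om z \<partial>lborel)
      \<le> (\<integral>\<^sup>+z. \<integral>\<^sup>+c. g z * indicator (unit_cell c) z \<partial>count_space C \<partial>lborel)"
    by (rule nn_integral_mono)
  also have "\<dots> = (\<integral>\<^sup>+c. \<integral>\<^sup>+z. g z * indicator (unit_cell c) z \<partial>lborel \<partial>count_space C)"
    by (rule nn_integral_count_space_nn_integral) auto
  finally show ?thesis .
qed

lemma nn_integral_sum_unit_cells_le:
  fixes g :: "real \<times> real \<Rightarrow> ennreal"
  assumes [measurable]: "g \<in> borel_measurable borel"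
    and inside: "\<And>c z. c \<in> C \<Longrightarrow> z \<in> unit_cell c \<Longrightarrow> z \<notin> lattice_lines \<Longrightarrow> z \<in> Om"
  shows "(\<integral>\<^sup>+c. \<integral>\<^sup>+z. g z * indicator (unit_cell c) z \<partial>lborel \<partial>count_space C)
     \<le> (\<integral>\<^sup>+z. g z * indicator Om z \<partial>lborel)"
proof -
  have "AE z in lborel. z \<notin> lattice_lines"
    using AE_lborel_scaled_not_lattice_lines[of 1 1] by simp
  then have "AE z in lborel. (\<integral>\<^sup>+c. g z * indicator (unit_cell c) z \<partial>count_space C) \<le> g z * indicator Om z"
  proof eventually_elim
    case (elim z)
    note z = elim
    let ?c0 = "(\<lfloor>fst z\<rfloor>, \<lfloor>snd z\<rfloor>)"
    have "(\<integral>\<^sup>+c. g z * indicator (unit_cell c) z \<partial>count_space C)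
        = (if ?c0 \<in> C then g z * indicator (unit_cell ?c0) z else 0)"
      using unit_cell_unique[OF _ z] by (intro nn_integral_count_space_single) (auto split: split_indicator)
    also have "\<dots> \<le> g z * indicator Om z"
      using inside[of ?c0 z] z by (auto split: split_indicator)
    finally show ?case .
  qed
  then have "(\<integral>\<^sup>+z. \<integral>\<^sup>+c. g z * indicator (unit_cell c) z \<partial>count_space C \<partial>lborel)
      \<le> (\<integral>\<^sup>+z. g z * indicator Om z \<partial>lborel)"
    by (rule nn_integral_mono_AE)
  then show ?thesis
    by (subst nn_integral_count_space_nn_integral[symmetric]) auto
qed

definition cell_corners :: "(int \<times> int) set" where
  "cell_corners = {(0, 0), (1, 0), (0, 1), (1, 1)}"

lemma sum_cell_corners:
  "(\<Sum>k\<in>cell_corners. f ((i, j) + k)) = f (i, j) + f (i+1, j) + f (i, j+1) + (f (i+1, j+1) :: ennreal)"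
  by (simp add: cell_corners_def add_ac)

lemma nn_integral_count_space_le_cell_corners:
  fixes f :: "int \<times> int \<Rightarrow> ennreal"
  assumes "\<And>y. y \<in> G \<Longrightarrow> \<exists>k\<in>cell_corners. y - k \<in> C"
  shows "(\<integral>\<^sup>+y. f y \<partial>count_space G) \<le> (\<integral>\<^sup>+c. (\<Sum>k\<in>cell_corners. f (c + k)) \<partial>count_space C)"
proof -
  have "f y * indicator G y \<le> (\<Sum>k\<in>cell_corners. f y * indicator ((\<lambda>c. c + k) ` C) y)" for y
  proof (cases "y \<in> G")
    case True
    then obtain k where k: "k \<in> cell_corners" "y - k \<in> C"
      using assms by blast
    then have "y \<in> (\<lambda>c. c + k) ` C"
      by (auto intro!: image_eqI[where x="y - k"])
    then have "f y * indicator G y = f y * indicator ((\<lambda>c. c + k) ` C) y"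
      using True by simp
    also have "\<dots> \<le> (\<Sum>k\<in>cell_corners. f y * indicator ((\<lambda>c. c + k) ` C) y)"
      by (rule member_le_sum[OF k(1)]) (auto simp: cell_corners_def)
    finally show ?thesis .
  qed simp
  then have "(\<integral>\<^sup>+y. f y \<partial>count_space G)
      \<le> (\<integral>\<^sup>+y. (\<Sum>k\<in>cell_corners. f y * indicator ((\<lambda>c. c + k) ` C) y) \<partial>count_space UNIV)"
    by (simp add: nn_integral_count_space_indicator nn_integral_mono)
  also have "\<dots> = (\<Sum>k\<in>cell_corners. \<integral>\<^sup>+c. f (c + k) \<partial>count_space C)"
    by (simp add: nn_integral_sum nn_integral_count_space_translate nn_integral_count_space_indicator)
  also have "\<dots> = (\<integral>\<^sup>+c. (\<Sum>k\<in>cell_corners. f (c + k)) \<partial>count_space C)"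
    by (rule nn_integral_sum[symmetric]) simp
  finally show ?thesis .
qed

lemma nn_integral_pl_interp_power_upper:
  assumes U: "\<And>z. U z \<ge> 0"
    and cover: "\<And>z. z \<in> Om \<Longrightarrow> \<exists>c\<in>C. z \<in> unit_cell c"
    and corners: "\<And>c k. c \<in> C \<Longrightarrow> k \<in> cell_corners \<Longrightarrow> c + k \<in> G"
  shows "(\<integral>\<^sup>+z. ennreal (pl_interp U (fst z) (snd z) ^ p) * indicator Om z \<partial>lborel)
     \<le> 4 * (\<integral>\<^sup>+y. ennreal (U y ^ p) \<partial>count_space G)"
proof -
  have "(\<integral>\<^sup>+z. ennreal (pl_interp U (fst z) (snd z) ^ p) * indicator Om z \<partial>lborel)
      \<le> (\<integral>\<^sup>+c. \<integral>\<^sup>+z. ennreal (pl_interp U (fst z) (snd z) ^ p) * indicator (unit_cell c) z \<partial>lborel \<partial>count_space C)"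
    by (rule nn_integral_le_sum_unit_cells[OF _ cover]) measurable
  also have "\<dots> \<le> (\<integral>\<^sup>+c. (\<Sum>k\<in>cell_corners. ennreal (U (c + k) ^ p)) \<partial>count_space C)"
  proof (rule nn_integral_mono)
    fix c :: "int \<times> int"
    show "(\<integral>\<^sup>+z. ennreal (pl_interp U (fst z) (snd z) ^ p) * indicator (unit_cell c) z \<partial>lborel)
        \<le> (\<Sum>k\<in>cell_corners. ennreal (U (c + k) ^ p))"
      using nn_integral_cell_upper[of U p "fst c" "snd c", OF U] U
      by (simp add: sum_cell_corners[of "\<lambda>z. ennreal (U z ^ p)" "fst c" "snd c", simplified])
  qed
  also have "\<dots> = (\<Sum>k\<in>cell_corners. \<integral>\<^sup>+c. ennreal (U (c + k) ^ p) \<partial>count_space C)"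
    by (rule nn_integral_sum) simp
  also have "\<dots> \<le> (\<Sum>k\<in>cell_corners. \<integral>\<^sup>+y. ennreal (U y ^ p) \<partial>count_space G)"
  proof (rule sum_mono)
    fix k
    assume "k \<in> cell_corners"
    then have "(\<lambda>c. c + k) ` C \<subseteq> G"
      using corners by blast
    then have "(\<integral>\<^sup>+y. ennreal (U y ^ p) \<partial>count_space ((\<lambda>c. c + k) ` C)) \<le> (\<integral>\<^sup>+y. ennreal (U y ^ p) \<partial>count_space G)"
      by (rule nn_integral_count_space_mono_set)
    then show "(\<integral>\<^sup>+c. ennreal (U (c + k) ^ p) \<partial>count_space C) \<le> (\<integral>\<^sup>+y. ennreal (U y ^ p) \<partial>count_space G)"
      by (simp add: nn_integral_count_space_translate[where g="\<lambda>y. ennreal (U y ^ p)"])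
  qed
  also have "\<dots> = 4 * (\<integral>\<^sup>+y. ennreal (U y ^ p) \<partial>count_space G)"
    by (simp add: cell_corners_def)
  finally show ?thesis .
qed

lemma nn_integral_pl_interp_power_lower:
  assumes U: "\<And>z. U z \<ge> 0" and p: "p \<ge> 1"
    and inside: "\<And>c z. c \<in> C \<Longrightarrow> z \<in> unit_cell c \<Longrightarrow> z \<notin> lattice_lines \<Longrightarrow> z \<in> Om"
    and corners: "\<And>y. y \<in> G \<Longrightarrow> \<exists>k\<in>cell_corners. y - k \<in> C"
  shows "ennreal (1 / ((real p + 1) * (real p + 2))) * (\<integral>\<^sup>+y. ennreal (U y ^ p) \<partial>count_space G)
     \<le> (\<integral>\<^sup>+z. ennreal (pl_interp U (fst z) (snd z) ^ p) * indicator Om z \<partial>lborel)"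
proof -
  let ?q = "(real p + 1) * (real p + 2)"
  have "ennreal (1 / ?q) * (\<integral>\<^sup>+y. ennreal (U y ^ p) \<partial>count_space G)
      \<le> ennreal (1 / ?q) * (\<integral>\<^sup>+c. (\<Sum>k\<in>cell_corners. ennreal (U (c + k) ^ p)) \<partial>count_space C)"
    by (intro mult_left_mono nn_integral_count_space_le_cell_corners corners) auto
  also have "\<dots> = (\<integral>\<^sup>+c. ennreal (1 / ?q) * (\<Sum>k\<in>cell_corners. ennreal (U (c + k) ^ p)) \<partial>count_space C)"
    by (rule nn_integral_cmult[symmetric]) simp
  also have "\<dots> \<le> (\<integral>\<^sup>+c. \<integral>\<^sup>+z. ennreal (pl_interp U (fst z) (snd z) ^ p) * indicator (unit_cell c) z \<partial>lborel \<partial>count_space C)"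
  proof (rule nn_integral_mono)
    fix c :: "int \<times> int"
    obtain i j where c: "c = (i, j)"
      by (cases c)
    have "ennreal (1 / ?q) * (\<Sum>k\<in>cell_corners. ennreal (U (c + k) ^ p))
        = ennreal ((U (i, j) ^ p + U (i+1, j) ^ p + U (i, j+1) ^ p + U (i+1, j+1) ^ p) / ?q)"
      unfolding c sum_cell_corners[of "\<lambda>z. ennreal (U z ^ p)"] using U
      by (simp add: ennreal_mult''[symmetric] add_nonneg_nonneg del: ennreal_plus add: ennreal_plus[symmetric])
    then show "ennreal (1 / ?q) * (\<Sum>k\<in>cell_corners. ennreal (U (c + k) ^ p))
        \<le> (\<integral>\<^sup>+z. ennreal (pl_interp U (fst z) (snd z) ^ p) * indicator (unit_cell c) z \<partial>lborel)"
      unfolding c using nn_integral_cell_lower[OF U p] by simp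
  qed
  also have "\<dots> \<le> (\<integral>\<^sup>+z. ennreal (pl_interp U (fst z) (snd z) ^ p) * indicator Om z \<partial>lborel)"
    by (rule nn_integral_sum_unit_cells_le[OF _ inside]) measurable
  finally show ?thesis .
qed

section \<open>The Dirichlet energy of the interpolant\<close>

definition lattice_point :: "int \<times> int \<Rightarrow> real \<times> real" where
  "lattice_point c = (of_int (fst c), of_int (snd c))"

definition cell_grad_energy :: "(int \<times> int \<Rightarrow> real) \<Rightarrow> real \<Rightarrow> real \<Rightarrow> int \<times> int \<Rightarrow> real \<times> real \<Rightarrow> ennreal" where
  "cell_grad_energy U h1 h2 c z =
     ennreal ((lattice_diff1 U h1 c)\<^sup>2 + (lattice_diff2 U h2 (c + (1, 0)))\<^sup>2) * indicator ref_tri1 (z - lattice_point c)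
   + ennreal ((lattice_diff1 U h1 (c + (0, 1)))\<^sup>2 + (lattice_diff2 U h2 c)\<^sup>2) * indicator ref_tri2 (z - lattice_point c)"

lemma pl_grad_sq_le_cell_grad_energy:
  assumes z: "z \<notin> lattice_lines"
  shows "ennreal ((norm (pl_grad U h1 h2 z))\<^sup>2) \<le> cell_grad_energy U h1 h2 (\<lfloor>fst z\<rfloor>, \<lfloor>snd z\<rfloor>) z"
proof -
  define i where "i = \<lfloor>fst z\<rfloor>"
  define j where "j = \<lfloor>snd z\<rfloor>"
  have ij: "of_int i < fst z" "fst z < of_int i + 1" "of_int j < snd z" "snd z < of_int j + 1"
    "snd z - of_int j \<noteq> fst z - of_int i"
    using not_lattice_lines_floor[OF z] by (simp_all add: i_def j_def)
  show ?thesis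
  proof (cases "snd z - of_int j < fst z - of_int i")
    case True
    then have "(norm (pl_grad U h1 h2 z))\<^sup>2 = (lattice_diff1 U h1 (i, j))\<^sup>2 + (lattice_diff2 U h2 (i+1, j))\<^sup>2"
      using z by (simp add: pl_grad_def i_def j_def norm_Pair Let_def)
    moreover have "z - lattice_point (i, j) \<in> ref_tri1"
      using ij True by (simp add: ref_tri1_def lattice_point_def)
    ultimately show ?thesis
      by (simp add: cell_grad_energy_def i_def j_def)
  next
    case False
    then have "(norm (pl_grad U h1 h2 z))\<^sup>2 = (lattice_diff1 U h1 (i, j+1))\<^sup>2 + (lattice_diff2 U h2 (i, j))\<^sup>2"
      using z by (simp add: pl_grad_def i_def j_def norm_Pair Let_def)
    moreover have "z - lattice_point (i, j) \<in> ref_tri2"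
      using ij False by (simp add: ref_tri2_def lattice_point_def)
    ultimately show ?thesis
      by (simp add: cell_grad_energy_def i_def j_def)
  qed
qed

lemma borel_measurable_cell_grad_energy:
  assumes "continuous_on UNIV g"
  shows "(\<lambda>x. cell_grad_energy U h1 h2 c (g x)) \<in> borel_measurable borel"
proof -
  have "continuous_on UNIV (\<lambda>x. g x - lattice_point c)"
    using assms by (intro continuous_intros)
  then have [measurable]: "(\<lambda>x. indicator ref_tri1 (g x - lattice_point c) :: ennreal) \<in> borel_measurable borel"
    "(\<lambda>x. indicator ref_tri2 (g x - lattice_point c) :: ennreal) \<in> borel_measurable borel"
    by (auto intro!: borel_measurable_indicator_continuous)
  show ?thesis
    unfolding cell_grad_energy_def by measurable
qed

lemma nn_integral_translated_ref_tri:
  "(\<integral>\<^sup>+z. indicator ref_tri1 (z - c) \<partial>lborel) = ennreal (1/2)"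
  "(\<integral>\<^sup>+z. indicator ref_tri2 (z - c) \<partial>lborel) = ennreal (1/2)"
proof -
  have [measurable]: "(\<lambda>z. indicator ref_tri1 (z - c) :: ennreal) \<in> borel_measurable borel"
    "(\<lambda>z. indicator ref_tri2 (z - c) :: ennreal) \<in> borel_measurable borel"
    by (auto intro!: borel_measurable_indicator_continuous continuous_intros)
  show "(\<integral>\<^sup>+z. indicator ref_tri1 (z - c) \<partial>lborel) = ennreal (1/2)"
    using nn_integral_ref_tri1_pow_1_minus_fst[of 0]
    by (subst nn_integral_lborel_translate[where c=c]) simp_all
  show "(\<integral>\<^sup>+z. indicator ref_tri2 (z - c) \<partial>lborel) = ennreal (1/2)"
    using nn_integral_ref_tri2_pow_snd_minus_fst[of 0]
    by (subst nn_integral_lborel_translate[where c=c]) simp_all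
qed

lemma nn_integral_cell_grad_energy:
  assumes h: "h1 > 0" "h2 > 0"
  shows "(\<integral>\<^sup>+x. cell_grad_energy U h1 h2 c (fst x / h1, snd x / h2) \<partial>lborel)
     = ennreal (h1 * h2) * (ennreal (1/2) * (ennreal ((lattice_diff1 U h1 c)\<^sup>2) + ennreal ((lattice_diff2 U h2 (c + (1, 0)))\<^sup>2)
         + ennreal ((lattice_diff1 U h1 (c + (0, 1)))\<^sup>2) + ennreal ((lattice_diff2 U h2 c)\<^sup>2)))"
proof -
  have [measurable]: "(\<lambda>x. cell_grad_energy U h1 h2 c (fst x / h1, snd x / h2)) \<in> borel_measurable borel"
    "(\<lambda>x. cell_grad_energy U h1 h2 c x) \<in> borel_measurable borel"
    using h by (auto intro!: borel_measurable_cell_grad_energy continuous_intros)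
  have "(\<integral>\<^sup>+x. cell_grad_energy U h1 h2 c (fst x / h1, snd x / h2) \<partial>lborel)
      = ennreal (h1 * h2) * (\<integral>\<^sup>+z. cell_grad_energy U h1 h2 c z \<partial>lborel)"
    using h by (subst nn_integral_lborel_scale[OF _ h]) simp_all
  also have "(\<integral>\<^sup>+z. cell_grad_energy U h1 h2 c z \<partial>lborel)
      = ennreal (1/2) * (ennreal ((lattice_diff1 U h1 c)\<^sup>2) + ennreal ((lattice_diff2 U h2 (c + (1, 0)))\<^sup>2)
         + ennreal ((lattice_diff1 U h1 (c + (0, 1)))\<^sup>2) + ennreal ((lattice_diff2 U h2 c)\<^sup>2))"
  proof -
    have [measurable]: "(\<lambda>z. indicator ref_tri1 (z - lattice_point c) :: ennreal) \<in> borel_measurable borel"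
      "(\<lambda>z. indicator ref_tri2 (z - lattice_point c) :: ennreal) \<in> borel_measurable borel"
      by (auto intro!: borel_measurable_indicator_continuous continuous_intros)
    have "(\<integral>\<^sup>+z. cell_grad_energy U h1 h2 c z \<partial>lborel)
        = ennreal ((lattice_diff1 U h1 c)\<^sup>2 + (lattice_diff2 U h2 (c + (1, 0)))\<^sup>2) * ennreal (1/2)
        + ennreal ((lattice_diff1 U h1 (c + (0, 1)))\<^sup>2 + (lattice_diff2 U h2 c)\<^sup>2) * ennreal (1/2)"
      by (simp add: cell_grad_energy_def nn_integral_add nn_integral_cmult nn_integral_translated_ref_tri)
    then show ?thesis
      by (simp add: algebra_simps)
  qed
  finally show ?thesis .
qed

lemma ennreal_half_double: "ennreal (1/2) * (a + b + a + b) = a + (b :: ennreal)"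
proof -
  have "a + b + a + b = 2 * (a + b)"
    by (simp add: algebra_simps mult_2_right)
  then have "ennreal (1/2) * (a + b + a + b) = (ennreal (1/2) * 2) * (a + b)"
    by (simp only: mult.assoc)
  also have "ennreal (1/2) * 2 = 1"
    by (subst ennreal_numeral[symmetric], subst ennreal_mult[symmetric]) auto
  finally show ?thesis
    by simp
qed

lemma nn_integral_pl_grad_sq_le:
  fixes U :: "int \<times> int \<Rightarrow> real" and Om :: "(real \<times> real) set"
  assumes h: "h1 > 0" "h2 > 0"
    and cover: "\<And>x. x \<in> Om \<Longrightarrow> (\<lfloor>fst x / h1\<rfloor>, \<lfloor>snd x / h2\<rfloor>) \<in> C"
    and edges: "\<And>c. c \<in> C \<Longrightarrow> c \<in> G1 \<and> c + (0, 1) \<in> G1 \<and> c + (1, 0) \<in> G2 \<and> c \<in> G2"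
  shows "(\<integral>\<^sup>+x. ennreal ((norm (pl_grad U h1 h2 (fst x / h1, snd x / h2)))\<^sup>2) * indicator Om x \<partial>lborel)
    \<le> ennreal (h1 * h2) * ((\<integral>\<^sup>+z. ennreal ((lattice_diff1 U h1 z)\<^sup>2) \<partial>count_space G1)
                         + (\<integral>\<^sup>+z. ennreal ((lattice_diff2 U h2 z)\<^sup>2) \<partial>count_space G2))"
proof -
  let ?sc = "\<lambda>x::real \<times> real. (fst x / h1, snd x / h2)"
  define D1 where "D1 z = ennreal ((lattice_diff1 U h1 z)\<^sup>2)" for z
  define D2 where "D2 z = ennreal ((lattice_diff2 U h2 z)\<^sup>2)" for z
  let ?A1 = "\<integral>\<^sup>+z. D1 z \<partial>count_space G1" and ?A2 = "\<integral>\<^sup>+z. D2 z \<partial>count_space G2"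
  have "AE x in lborel. ?sc x \<notin> lattice_lines"
    using AE_lborel_scaled_not_lattice_lines[of h1 h2] h by (simp add: less_imp_neq[symmetric])
  then have "AE x in lborel. ennreal ((norm (pl_grad U h1 h2 (?sc x)))\<^sup>2) * indicator Om x
      \<le> (\<integral>\<^sup>+c. cell_grad_energy U h1 h2 c (?sc x) \<partial>count_space C)"
  proof eventually_elim
    case (elim x)
    show ?case
    proof (cases "x \<in> Om")
      case True
      then have "ennreal ((norm (pl_grad U h1 h2 (?sc x)))\<^sup>2) * indicator Om x
          \<le> cell_grad_energy U h1 h2 (\<lfloor>fst x / h1\<rfloor>, \<lfloor>snd x / h2\<rfloor>) (?sc x)"
        using pl_grad_sq_le_cell_grad_energy[OF elim] by simp
      also have "\<dots> \<le> (\<integral>\<^sup>+c. cell_grad_energy U h1 h2 c (?sc x) \<partial>count_space C)"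
        by (rule nn_integral_ge_point[OF cover[OF True]])
      finally show ?thesis .
    qed simp
  qed
  then have "(\<integral>\<^sup>+x. ennreal ((norm (pl_grad U h1 h2 (?sc x)))\<^sup>2) * indicator Om x \<partial>lborel)
      \<le> (\<integral>\<^sup>+x. \<integral>\<^sup>+c. cell_grad_energy U h1 h2 c (?sc x) \<partial>count_space C \<partial>lborel)"
    by (rule nn_integral_mono_AE)
  also have "\<dots> = (\<integral>\<^sup>+c. \<integral>\<^sup>+x. cell_grad_energy U h1 h2 c (?sc x) \<partial>lborel \<partial>count_space C)"
  proof (rule nn_integral_count_space_nn_integral)
    show "(\<lambda>x. cell_grad_energy U h1 h2 c (?sc x)) \<in> borel_measurable lborel" for c
      using h by (auto intro!: borel_measurable_cell_grad_energy continuous_intros)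
  qed simp
  also have "\<dots> = ennreal (h1 * h2) * (ennreal (1/2) * ((\<integral>\<^sup>+c. D1 c \<partial>count_space C)
      + (\<integral>\<^sup>+c. D2 (c + (1, 0)) \<partial>count_space C) + (\<integral>\<^sup>+c. D1 (c + (0, 1)) \<partial>count_space C)
      + (\<integral>\<^sup>+c. D2 c \<partial>count_space C)))"
    by (simp add: nn_integral_cell_grad_energy[OF h] D1_def D2_def nn_integral_cmult nn_integral_add)
  also have "\<dots> \<le> ennreal (h1 * h2) * (ennreal (1/2) * (?A1 + ?A2 + ?A1 + ?A2))"
  proof -
    have "C \<subseteq> G1" "(\<lambda>c. c + (1, 0)) ` C \<subseteq> G2" "(\<lambda>c. c + (0, 1)) ` C \<subseteq> G1" "C \<subseteq> G2"
      using edges by blast+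
    then show ?thesis
      unfolding nn_integral_count_space_translate[where g=D1] nn_integral_count_space_translate[where g=D2]
      by (intro mult_left_mono add_mono nn_integral_count_space_mono_set) auto
  qed
  also have "ennreal (1/2) * (?A1 + ?A2 + ?A1 + ?A2) = ?A1 + ?A2"
    by (rule ennreal_half_double)
  finally show ?thesis
    by (simp add: D1_def D2_def)
qed

definition open_ereal_ivl :: "ereal \<Rightarrow> ereal \<Rightarrow> real set" where
  "open_ereal_ivl a b = {x. a < ereal x \<and> ereal x < b}"

definition closed_ereal_ivl :: "ereal \<Rightarrow> ereal \<Rightarrow> real set" where
  "closed_ereal_ivl a b = {x. a \<le> ereal x \<and> ereal x \<le> b}"

lemma box_ereal_eq_Times: "box_ereal a1 b1 a2 b2 = open_ereal_ivl a1 b1 \<times> open_ereal_ivl a2 b2"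
  by (auto simp: box_ereal_def open_ereal_ivl_def)

lemma open_ereal_ivl_cases:
  "a < b \<Longrightarrow>
    (\<exists>r s. a = ereal r \<and> b = ereal s \<and> open_ereal_ivl a b = {r<..<s} \<and> closed_ereal_ivl a b = {r..s} \<and> r < s)
  \<or> (\<exists>r. a = ereal r \<and> b = \<infinity> \<and> open_ereal_ivl a b = {r<..} \<and> closed_ereal_ivl a b = {r..})
  \<or> (\<exists>s. a = -\<infinity> \<and> b = ereal s \<and> open_ereal_ivl a b = {..<s} \<and> closed_ereal_ivl a b = {..s})
  \<or> (a = -\<infinity> \<and> b = \<infinity> \<and> open_ereal_ivl a b = UNIV \<and> closed_ereal_ivl a b = UNIV)"
  by (cases a; cases b) (auto simp: open_ereal_ivl_def closed_ereal_ivl_def)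

lemma closure_open_ereal_ivl: "a < b \<Longrightarrow> closure (open_ereal_ivl a b) = closed_ereal_ivl a b"
  using open_ereal_ivl_cases[of a b] by auto

lemma open_open_ereal_ivl: "a < b \<Longrightarrow> open (open_ereal_ivl a b)"
  using open_ereal_ivl_cases[of a b] by auto

definition mesh_indices :: "real \<Rightarrow> ereal \<Rightarrow> ereal \<Rightarrow> int set" where
  "mesh_indices h a b = {z. h * of_int z \<in> closed_ereal_ivl a b}"

lemma floor_in_mesh_indices:
  assumes h: "h > 0" and a: "lower_aligned h a" and b: "upper_aligned h b" and x: "h * x \<in> open_ereal_ivl a b"
  shows "\<lfloor>x\<rfloor> \<in> mesh_indices h a b" "\<lfloor>x\<rfloor> + 1 \<in> mesh_indices h a b"
proof -
  have lo: "a \<le> ereal (h * of_int \<lfloor>x\<rfloor>)"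
  proof (cases "a = -\<infinity>")
    case False
    then obtain k where k: "a = ereal (h * of_int k)"
      using a by (auto simp: lower_aligned_def)
    then have "h * k < h * x"
      using x by (auto simp: open_ereal_ivl_def)
    then have "k \<le> \<lfloor>x\<rfloor>"
      using h by simp linarith
    then show ?thesis
      using k h by simp
  qed simp
  have hi: "ereal (h * (of_int \<lfloor>x\<rfloor> + 1)) \<le> b"
  proof (cases "b = \<infinity>")
    case False
    then obtain l where l: "b = ereal (h * of_int l)"
      using b by (auto simp: upper_aligned_def)
    then have "h * x < h * l"
      using x by (auto simp: open_ereal_ivl_def)
    then have "\<lfloor>x\<rfloor> + 1 \<le> l"
      using h by simp linarith
    then have "of_int \<lfloor>x\<rfloor> + 1 \<le> (of_int l :: real)"
      by linarith
    then show ?thesis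
      using l h by simp
  qed simp
  have mid: "ereal (h * of_int \<lfloor>x\<rfloor>) \<le> ereal (h * (of_int \<lfloor>x\<rfloor> + 1))"
    using h by simp
  show "\<lfloor>x\<rfloor> \<in> mesh_indices h a b"
    using lo order_trans[OF mid hi] by (simp add: mesh_indices_def closed_ereal_ivl_def)
  show "\<lfloor>x\<rfloor> + 1 \<in> mesh_indices h a b"
    using order_trans[OF lo mid] hi by (simp add: mesh_indices_def closed_ereal_ivl_def)
qed

lemma mesh_indices_succ:
  assumes h: "h > 0" and b: "upper_aligned h b" and z: "z \<in> mesh_indices h a b"
    and ne: "ereal (h * of_int z) \<noteq> b"
  shows "z + 1 \<in> mesh_indices h a b"
proof -
  have zb: "ereal (h * of_int z) < b"
    using z ne by (auto simp: mesh_indices_def closed_ereal_ivl_def)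
  have hi: "ereal (h * (of_int z + 1)) \<le> b"
  proof (cases "b = \<infinity>")
    case False
    then obtain l where l: "b = ereal (h * of_int l)"
      using b by (auto simp: upper_aligned_def)
    then have "z < l"
      using zb h by simp
    then have "of_int z + 1 \<le> (of_int l :: real)"
      by linarith
    then show ?thesis
      using l h by simp
  qed simp
  have "a \<le> ereal (h * of_int z)"
    using z by (auto simp: mesh_indices_def closed_ereal_ivl_def)
  also have "\<dots> \<le> ereal (h * (of_int z + 1))"
    using h by simp
  finally show ?thesis
    using hi by (simp add: mesh_indices_def closed_ereal_ivl_def)
qed

lemma mesh_indices_pred:
  assumes h: "h > 0" and a: "lower_aligned h a" and z: "z \<in> mesh_indices h a b"
    and ne: "ereal (h * of_int z) \<noteq> a"
  shows "z - 1 \<in> mesh_indices h a b"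
proof -
  have az: "a < ereal (h * of_int z)"
    using z ne by (auto simp: mesh_indices_def closed_ereal_ivl_def)
  have lo: "a \<le> ereal (h * (of_int z - 1))"
  proof (cases "a = -\<infinity>")
    case False
    then obtain k where k: "a = ereal (h * of_int k)"
      using a by (auto simp: lower_aligned_def)
    then have "k < z"
      using az h by simp
    then have "(of_int k :: real) \<le> of_int z - 1"
      by linarith
    then show ?thesis
      using k h by simp
  qed simp
  have "ereal (h * (of_int z - 1)) \<le> ereal (h * of_int z)"
    using h by simp
  also have "\<dots> \<le> b"
    using z by (auto simp: mesh_indices_def closed_ereal_ivl_def)
  finally show ?thesis
    using lo by (simp add: mesh_indices_def closed_ereal_ivl_def)
qed

lemma mesh_indices_neighbour:
  assumes h: "h > 0" and a: "lower_aligned h a" and b: "upper_aligned h b" and wide: "a + ereal h < b"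
    and z: "z \<in> mesh_indices h a b"
  shows "z + 1 \<in> mesh_indices h a b \<or> z - 1 \<in> mesh_indices h a b"
proof (cases "ereal (h * of_int z) = b")
  case True
  have "ereal (h * of_int z) \<noteq> a"
  proof
    assume "ereal (h * of_int z) = a"
    with True wide have "b + ereal h < b"
      by simp
    moreover have "b \<le> b + ereal h"
      using h by (simp add: True[symmetric])
    ultimately show False
      by simp
  qed
  then show ?thesis
    using mesh_indices_pred[OF h a z] by simp
next
  case False
  then show ?thesis
    using mesh_indices_succ[OF h b z] by simp
qed

lemma mesh_cell_in_open_ereal_ivl:
  assumes h: "h > 0" and z: "z \<in> mesh_indices h a b" "z + 1 \<in> mesh_indices h a b"
    and s: "of_int z < s" "s < of_int z + 1"
  shows "h * s \<in> open_ereal_ivl a b"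
proof -
  have "a \<le> ereal (h * of_int z)"
    using z by (auto simp: mesh_indices_def closed_ereal_ivl_def)
  also have "\<dots> < ereal (h * s)"
    using h s by simp
  finally have lower: "a < ereal (h * s)" .
  have "ereal (h * s) < ereal (h * (of_int z + 1))"
    using h s by simp
  also have "\<dots> \<le> b"
    using z by (auto simp: mesh_indices_def closed_ereal_ivl_def)
  finally show ?thesis
    using lower by (simp add: open_ereal_ivl_def)
qed

locale mesh_box =
  fixes h1 h2 :: real and a1 b1 a2 b2 :: ereal
  assumes h_pos: "h1 > 0" "h2 > 0"
    and aligned: "lower_aligned h1 a1" "upper_aligned h1 b1" "lower_aligned h2 a2" "upper_aligned h2 b2"
    and wide: "a1 + ereal h1 < b1" "a2 + ereal h2 < b2"
begin

abbreviation I1 :: "int set" where "I1 \<equiv> mesh_indices h1 a1 b1"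
abbreviation I2 :: "int set" where "I2 \<equiv> mesh_indices h2 a2 b2"

definition nodes :: "(int \<times> int) set" where
  "nodes = I1 \<times> I2"

definition cells :: "(int \<times> int) set" where
  "cells = {c. fst c \<in> I1 \<and> fst c + 1 \<in> I1 \<and> snd c \<in> I2 \<and> snd c + 1 \<in> I2}"

definition nodes1 :: "(int \<times> int) set" where
  "nodes1 = {c \<in> nodes. fst c + 1 \<in> I1}"

definition nodes2 :: "(int \<times> int) set" where
  "nodes2 = {c \<in> nodes. snd c + 1 \<in> I2}"

definition node_point :: "int \<times> int \<Rightarrow> real \<times> real" where
  "node_point z = (h1 * of_int (fst z), h2 * of_int (snd z))"

definition unit_box :: "(real \<times> real) set" where
  "unit_box = {z. (h1 * fst z, h2 * snd z) \<in> box_ereal a1 b1 a2 b2}"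

lemma h_nonzero: "h1 \<noteq> 0" "h2 \<noteq> 0"
  using h_pos by auto

lemma ereal_less: "a1 < b1" "a2 < b2"
proof -
  have "a1 \<le> a1 + ereal h1"
    using h_pos by (cases a1) auto
  then show "a1 < b1"
    using wide by simp
  have "a2 \<le> a2 + ereal h2"
    using h_pos by (cases a2) auto
  then show "a2 < b2"
    using wide by simp
qed

lemma open_box: "open (box_ereal a1 b1 a2 b2)"
  using ereal_less by (simp add: box_ereal_eq_Times open_Times open_open_ereal_ivl)

lemma closure_box: "closure (box_ereal a1 b1 a2 b2) = closed_ereal_ivl a1 b1 \<times> closed_ereal_ivl a2 b2"
  using ereal_less by (simp add: box_ereal_eq_Times closure_Times closure_open_ereal_ivl)

lemma inj_node_point: "inj node_point"
  using h_nonzero by (auto simp: inj_def node_point_def)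

lemma grid_points_eq: "closure (box_ereal a1 b1 a2 b2) \<inter> grid h1 h2 = node_point ` nodes"
proof
  show "closure (box_ereal a1 b1 a2 b2) \<inter> grid h1 h2 \<subseteq> node_point ` nodes"
  proof
    fix y
    assume y: "y \<in> closure (box_ereal a1 b1 a2 b2) \<inter> grid h1 h2"
    then obtain z1 z2 where "y = (h1 * of_int z1, h2 * of_int z2)"
      by (auto simp: grid_def)
    with y show "y \<in> node_point ` nodes"
      by (auto simp: closure_box nodes_def mesh_indices_def node_point_def intro!: image_eqI[where x="(z1, z2)"])
  qed
  show "node_point ` nodes \<subseteq> closure (box_ereal a1 b1 a2 b2) \<inter> grid h1 h2"
    by (auto simp: closure_box nodes_def mesh_indices_def node_point_def grid_def)
qed

lemma grid_points_off_right_edge: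
  "closure (box_ereal a1 b1 a2 b2) \<inter> grid h1 h2
     - closure (box_ereal a1 b1 a2 b2) \<inter> grid h1 h2 \<inter> frontier (box_ereal a1 b1 a2 b2) \<inter> {x. ereal (fst x) = b1}
   = node_point ` nodes1" (is "?L = _")
proof
  show "node_point ` nodes1 \<subseteq> ?L"
  proof
    fix y
    assume "y \<in> node_point ` nodes1"
    then obtain z where z: "z \<in> nodes1" "y = node_point z"
      by blast
    have "ereal (h1 * of_int (fst z + 1)) \<le> b1"
      using z by (simp add: nodes1_def mesh_indices_def closed_ereal_ivl_def)
    moreover have "h1 * of_int (fst z) < h1 * of_int (fst z + 1)"
      using h_pos by simp
    ultimately have "ereal (fst y) \<noteq> b1"
      using z by (auto simp: node_point_def)
    then show "y \<in> ?L"
      using grid_points_eq z by (auto simp: nodes1_def)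
  qed
  show "?L \<subseteq> node_point ` nodes1"
  proof
    fix y
    assume y: "y \<in> ?L"
    then obtain z where z: "z \<in> nodes" "y = node_point z"
      using grid_points_eq by auto
    have "ereal (h1 * of_int (fst z)) \<noteq> b1"
    proof
      assume edge: "ereal (h1 * of_int (fst z)) = b1"
      then have "y \<notin> box_ereal a1 b1 a2 b2"
        using z by (auto simp: box_ereal_def node_point_def)
      then have "y \<in> frontier (box_ereal a1 b1 a2 b2)"
        using y open_box by (auto simp: frontier_def interior_open)
      then show False
        using y edge z by (auto simp: node_point_def)
    qed
    then have "fst z + 1 \<in> I1"
      using mesh_indices_succ[OF h_pos(1) aligned(2)] z by (auto simp: nodes_def)
    then show "y \<in> node_point ` nodes1"
      using z by (auto simp: nodes1_def)
  qed
qed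

lemma grid_points_off_top_edge:
  "closure (box_ereal a1 b1 a2 b2) \<inter> grid h1 h2
     - closure (box_ereal a1 b1 a2 b2) \<inter> grid h1 h2 \<inter> frontier (box_ereal a1 b1 a2 b2) \<inter> {x. ereal (snd x) = b2}
   = node_point ` nodes2" (is "?L = _")
proof
  show "node_point ` nodes2 \<subseteq> ?L"
  proof
    fix y
    assume "y \<in> node_point ` nodes2"
    then obtain z where z: "z \<in> nodes2" "y = node_point z"
      by blast
    have "ereal (h2 * of_int (snd z + 1)) \<le> b2"
      using z by (simp add: nodes2_def mesh_indices_def closed_ereal_ivl_def)
    moreover have "h2 * of_int (snd z) < h2 * of_int (snd z + 1)"
      using h_pos by simp
    ultimately have "ereal (snd y) \<noteq> b2"
      using z by (auto simp: node_point_def)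
    then show "y \<in> ?L"
      using grid_points_eq z by (auto simp: nodes2_def)
  qed
  show "?L \<subseteq> node_point ` nodes2"
  proof
    fix y
    assume y: "y \<in> ?L"
    then obtain z where z: "z \<in> nodes" "y = node_point z"
      using grid_points_eq by auto
    have "ereal (h2 * of_int (snd z)) \<noteq> b2"
    proof
      assume edge: "ereal (h2 * of_int (snd z)) = b2"
      then have "y \<notin> box_ereal a1 b1 a2 b2"
        using z by (auto simp: box_ereal_def node_point_def)
      then have "y \<in> frontier (box_ereal a1 b1 a2 b2)"
        using y open_box by (auto simp: frontier_def interior_open)
      then show False
        using y edge z by (auto simp: node_point_def)
    qed
    then have "snd z + 1 \<in> I2"
      using mesh_indices_succ[OF h_pos(2) aligned(4)] z by (auto simp: nodes_def)
    then show "y \<in> node_point ` nodes2"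
      using z by (auto simp: nodes2_def)
  qed
qed

lemma floor_in_cells:
  assumes "(h1 * s, h2 * t) \<in> box_ereal a1 b1 a2 b2"
  shows "(\<lfloor>s\<rfloor>, \<lfloor>t\<rfloor>) \<in> cells"
  using assms floor_in_mesh_indices[OF h_pos(1) aligned(1,2)] floor_in_mesh_indices[OF h_pos(2) aligned(3,4)]
  by (simp add: cells_def box_ereal_eq_Times)

lemma unit_box_covered: "z \<in> unit_box \<Longrightarrow> \<exists>c\<in>cells. z \<in> unit_cell c"
  using floor_in_cells[of "fst z" "snd z"] by (force simp: unit_box_def unit_cell_def)

lemma box_point_cell: "x \<in> box_ereal a1 b1 a2 b2 \<Longrightarrow> (\<lfloor>fst x / h1\<rfloor>, \<lfloor>snd x / h2\<rfloor>) \<in> cells"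
  using floor_in_cells[of "fst x / h1" "snd x / h2"] h_nonzero by simp

lemma cell_corner_in_nodes: "c \<in> cells \<Longrightarrow> k \<in> cell_corners \<Longrightarrow> c + k \<in> nodes"
  by (auto simp: cell_corners_def cells_def nodes_def mem_Times_iff)

lemma cell_edges_in_nodes:
  "c \<in> cells \<Longrightarrow> c \<in> nodes1 \<and> c + (0, 1) \<in> nodes1 \<and> c + (1, 0) \<in> nodes2 \<and> c \<in> nodes2"
  by (auto simp: cells_def nodes1_def nodes2_def nodes_def mem_Times_iff)

lemma unit_cell_inside_unit_box:
  assumes c: "c \<in> cells" and z: "z \<in> unit_cell c" "z \<notin> lattice_lines"
  shows "z \<in> unit_box"
proof -
  have c_eq: "c = (\<lfloor>fst z\<rfloor>, \<lfloor>snd z\<rfloor>)"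
    by (rule unit_cell_unique[OF z])
  note floor_bounds = not_lattice_lines_floor[OF z(2)]
  have "h1 * fst z \<in> open_ereal_ivl a1 b1"
    using c c_eq floor_bounds by (intro mesh_cell_in_open_ereal_ivl[OF h_pos(1)]) (auto simp: cells_def)
  moreover have "h2 * snd z \<in> open_ereal_ivl a2 b2"
    using c c_eq floor_bounds by (intro mesh_cell_in_open_ereal_ivl[OF h_pos(2)]) (auto simp: cells_def)
  ultimately show ?thesis
    by (simp add: unit_box_def box_ereal_eq_Times)
qed

lemma node_is_cell_corner:
  assumes y: "y \<in> nodes"
  shows "\<exists>k\<in>cell_corners. y - k \<in> cells"
proof -
  have y1: "fst y \<in> I1" and y2: "snd y \<in> I2"
    using y by (auto simp: nodes_def)
  obtain k1 where k1: "k1 \<in> {0, 1}" "fst y - k1 \<in> I1" "fst y - k1 + 1 \<in> I1"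
    using mesh_indices_neighbour[OF h_pos(1) aligned(1,2) wide(1) y1] y1
    by (metis diff_0_right diff_add_cancel insertCI)
  obtain k2 where k2: "k2 \<in> {0, 1}" "snd y - k2 \<in> I2" "snd y - k2 + 1 \<in> I2"
    using mesh_indices_neighbour[OF h_pos(2) aligned(3,4) wide(2) y2] y2
    by (metis diff_0_right diff_add_cancel insertCI)
  have "(k1, k2) \<in> cell_corners"
    using k1(1) k2(1) by (auto simp: cell_corners_def)
  moreover have "y - (k1, k2) \<in> cells"
    using k1 k2 by (simp add: cells_def)
  ultimately show ?thesis
    by blast
qed

end

locale mesh_function = mesh_box +
  fixes u :: "real \<times> real \<Rightarrow> real"
  assumes u_nonneg: "\<forall>y \<in> closure (box_ereal a1 b1 a2 b2) \<inter> grid h1 h2. u y \<ge> 0"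
begin

text \<open>Clipping at \<open>0\<close> only changes values at lattice points outside the closed box,
  where \<open>u\<close> is arbitrary; it makes the interpolant nonnegative everywhere.\<close>

definition node_vals :: "int \<times> int \<Rightarrow> real" where
  "node_vals z = max 0 (u (node_point z))"

definition interpolant :: "real \<times> real \<Rightarrow> real" where
  "interpolant = mesh_interp h1 h2 node_vals"

lemma node_vals_nonneg: "node_vals z \<ge> 0"
  by (simp add: node_vals_def)

lemma node_vals_eq: "z \<in> nodes \<Longrightarrow> node_vals z = u (node_point z)"
  using u_nonneg grid_points_eq by (force simp: node_vals_def)

lemma interpolant_node_point: "interpolant (node_point z) = node_vals z"
  using mesh_interp_lattice[OF h_nonzero] by (simp add: interpolant_def node_point_def)

lemma interpolant_interpolates: "y \<in> node_point ` nodes \<Longrightarrow> u y = interpolant y"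
  using interpolant_node_point node_vals_eq by auto

lemma affine_on_interpolant: "affine_on interpolant (tri1 h1 h2 z1 z2)" "affine_on interpolant (tri2 h1 h2 z1 z2)"
  unfolding interpolant_def using affine_on_mesh_interp_tri1 affine_on_mesh_interp_tri2 h_pos by blast+

lemma continuous_on_interpolant: "continuous_on S interpolant"
  using continuous_mesh_interp[OF h_nonzero] continuous_on_subset
  unfolding interpolant_def by blast

lemma interpolant_nonneg: "interpolant x \<ge> 0"
  by (simp add: interpolant_def mesh_interp_def pl_interp_nonneg node_vals_nonneg)

lemma Dplus1_node_point:
  assumes "z \<in> nodes1"
  shows "Dplus1 h1 u (node_point z) = lattice_diff1 node_vals h1 z"
proof -
  have "z \<in> nodes" "(fst z + 1, snd z) \<in> nodes"
    using assms by (auto simp: nodes1_def nodes_def mem_Times_iff)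
  moreover have "(fst (node_point z) + h1, snd (node_point z)) = node_point (fst z + 1, snd z)"
    by (simp add: node_point_def algebra_simps)
  ultimately show ?thesis
    by (simp add: Dplus1_def lattice_diff1_def node_vals_eq)
qed

lemma Dplus2_node_point:
  assumes "z \<in> nodes2"
  shows "Dplus2 h2 u (node_point z) = lattice_diff2 node_vals h2 z"
proof -
  have "z \<in> nodes" "(fst z, snd z + 1) \<in> nodes"
    using assms by (auto simp: nodes2_def nodes_def mem_Times_iff)
  moreover have "(fst (node_point z), snd (node_point z) + h2) = node_point (fst z, snd z + 1)"
    by (simp add: node_point_def algebra_simps)
  ultimately show ?thesis
    by (simp add: Dplus2_def lattice_diff2_def node_vals_eq)
qed

lemma interpolant_right_deriv1:
  assumes "x \<in> node_point ` nodes1"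
  shows "((\<lambda>t. interpolant (fst x + t, snd x)) has_real_derivative Dplus1 h1 u x) (at_right 0)"
proof -
  from assms obtain z where z: "z \<in> nodes1" "x = node_point z"
    by blast
  show ?thesis
    using mesh_interp_right_deriv1[OF h_pos, of node_vals "fst z" "snd z"]
    unfolding z(2) Dplus1_node_point[OF z(1)] by (simp add: lattice_diff1_def interpolant_def node_point_def)
qed

lemma interpolant_right_deriv2:
  assumes "x \<in> node_point ` nodes2"
  shows "((\<lambda>t. interpolant (fst x, snd x + t)) has_real_derivative Dplus2 h2 u x) (at_right 0)"
proof -
  from assms obtain z where z: "z \<in> nodes2" "x = node_point z"
    by blast
  show ?thesis
    using mesh_interp_right_deriv2[OF h_pos, of node_vals "fst z" "snd z"]
    unfolding z(2) Dplus2_node_point[OF z(1)] by (simp add: lattice_diff2_def interpolant_def node_point_def)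
qed

lemma nn_integral_node_points:
  "(\<integral>\<^sup>+x. f x \<partial>count_space (node_point ` A)) = (\<integral>\<^sup>+z. f (node_point z) \<partial>count_space A)"
  using inj_node_point
  by (intro nn_integral_bij_count_space[symmetric]) (auto simp: bij_betw_def inj_on_def inj_def)

lemma nn_integral_node_powers:
  "(\<integral>\<^sup>+x. ennreal (u x ^ p * (h1 * h2)) \<partial>count_space (node_point ` nodes))
     = ennreal (h1 * h2) * (\<integral>\<^sup>+z. ennreal (node_vals z ^ p) \<partial>count_space nodes)"
proof -
  have "(\<integral>\<^sup>+x. ennreal (u x ^ p * (h1 * h2)) \<partial>count_space (node_point ` nodes))
      = (\<integral>\<^sup>+z. ennreal (h1 * h2) * ennreal (node_vals z ^ p) \<partial>count_space nodes)"
    unfolding nn_integral_node_points using h_pos node_vals_nonneg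
    by (intro nn_integral_cong) (simp add: node_vals_eq[symmetric] ennreal_mult[symmetric] mult.commute)
  then show ?thesis
    by (simp add: nn_integral_cmult)
qed

lemma nn_integral_interpolant_power:
  "(\<integral>\<^sup>+x. ennreal (interpolant x ^ p) * indicator (box_ereal a1 b1 a2 b2) x \<partial>lborel)
     = ennreal (h1 * h2) * (\<integral>\<^sup>+z. ennreal (pl_interp node_vals (fst z) (snd z) ^ p) * indicator unit_box z \<partial>lborel)"
proof -
  have [measurable]: "interpolant \<in> borel_measurable borel" "box_ereal a1 b1 a2 b2 \<in> sets borel"
    using open_box by (auto intro: borel_measurable_continuous_onI continuous_on_interpolant)
  have "(\<integral>\<^sup>+x. ennreal (interpolant x ^ p) * indicator (box_ereal a1 b1 a2 b2) x \<partial>lborel)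
      = ennreal (h1 * h2) * (\<integral>\<^sup>+z. ennreal (interpolant (h1 * fst z, h2 * snd z) ^ p)
          * indicator (box_ereal a1 b1 a2 b2) (h1 * fst z, h2 * snd z) \<partial>lborel)"
    by (rule nn_integral_lborel_scale[OF _ h_pos]) measurable
  also have "\<dots> = ennreal (h1 * h2) * (\<integral>\<^sup>+z. ennreal (pl_interp node_vals (fst z) (snd z) ^ p) * indicator unit_box z \<partial>lborel)"
    using h_nonzero by (simp add: interpolant_def mesh_interp_def unit_box_def indicator_def)
  finally show ?thesis .
qed

lemma nn_integral_interpolant_power_upper:
  "(\<integral>\<^sup>+x. ennreal (interpolant x ^ p) * indicator (box_ereal a1 b1 a2 b2) x \<partial>lborel)
     \<le> 8 * (\<integral>\<^sup>+x. ennreal (u x ^ p * (h1 * h2)) \<partial>count_space (node_point ` nodes))"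
proof -
  have "(\<integral>\<^sup>+z. ennreal (pl_interp node_vals (fst z) (snd z) ^ p) * indicator unit_box z \<partial>lborel)
      \<le> 4 * (\<integral>\<^sup>+z. ennreal (node_vals z ^ p) \<partial>count_space nodes)"
    using node_vals_nonneg unit_box_covered cell_corner_in_nodes by (rule nn_integral_pl_interp_power_upper)
  also have "\<dots> \<le> 8 * (\<integral>\<^sup>+z. ennreal (node_vals z ^ p) \<partial>count_space nodes)"
    by (intro mult_right_mono) auto
  finally have "ennreal (h1 * h2) * (\<integral>\<^sup>+z. ennreal (pl_interp node_vals (fst z) (snd z) ^ p) * indicator unit_box z \<partial>lborel)
      \<le> ennreal (h1 * h2) * (8 * (\<integral>\<^sup>+z. ennreal (node_vals z ^ p) \<partial>count_space nodes))"
    by (rule mult_left_mono) simp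
  then show ?thesis
    unfolding nn_integral_interpolant_power nn_integral_node_powers by (simp only: mult.left_commute)
qed

lemma nn_integral_interpolant_power_lower:
  assumes p: "p \<ge> 1"
  shows "ennreal (1 / (8 * real p ^ 2)) * (\<integral>\<^sup>+x. ennreal (u x ^ p * (h1 * h2)) \<partial>count_space (node_point ` nodes))
     \<le> (\<integral>\<^sup>+x. ennreal (interpolant x ^ p) * indicator (box_ereal a1 b1 a2 b2) x \<partial>lborel)"
proof -
  have p1: "1 \<le> real p"
    using p by simp
  then have "real p \<le> real p * real p"
    using mult_left_mono[of 1 "real p" "real p"] by simp
  moreover have "(real p + 1) * (real p + 2) = real p * real p + 3 * real p + 2"
    by (simp add: algebra_simps)
  ultimately have "(real p + 1) * (real p + 2) \<le> 8 * real p ^ 2"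
    unfolding power2_eq_square using p1 by linarith
  then have "ennreal (1 / (8 * real p ^ 2)) \<le> ennreal (1 / ((real p + 1) * (real p + 2)))"
    using p by (intro ennreal_leI divide_left_mono) auto
  then have "ennreal (1 / (8 * real p ^ 2)) * (\<integral>\<^sup>+z. ennreal (node_vals z ^ p) \<partial>count_space nodes)
      \<le> ennreal (1 / ((real p + 1) * (real p + 2))) * (\<integral>\<^sup>+z. ennreal (node_vals z ^ p) \<partial>count_space nodes)"
    by (rule mult_right_mono) simp
  also have "\<dots> \<le> (\<integral>\<^sup>+z. ennreal (pl_interp node_vals (fst z) (snd z) ^ p) * indicator unit_box z \<partial>lborel)"
    using node_vals_nonneg p unit_cell_inside_unit_box node_is_cell_corner
    by (rule nn_integral_pl_interp_power_lower)
  finally have "ennreal (h1 * h2) * (ennreal (1 / (8 * real p ^ 2)) * (\<integral>\<^sup>+z. ennreal (node_vals z ^ p) \<partial>count_space nodes))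
      \<le> ennreal (h1 * h2) * (\<integral>\<^sup>+z. ennreal (pl_interp node_vals (fst z) (snd z) ^ p) * indicator unit_box z \<partial>lborel)"
    by (rule mult_left_mono) simp
  then show ?thesis
    unfolding nn_integral_interpolant_power nn_integral_node_powers by (simp only: mult.left_commute)
qed

lemma nn_integral_Dplus1_sq:
  "(\<integral>\<^sup>+x. ennreal ((Dplus1 h1 u x)\<^sup>2 * (h1 * h2)) \<partial>count_space (node_point ` nodes1))
     = ennreal (h1 * h2) * (\<integral>\<^sup>+z. ennreal ((lattice_diff1 node_vals h1 z)\<^sup>2) \<partial>count_space nodes1)"
proof -
  have "(\<integral>\<^sup>+x. ennreal ((Dplus1 h1 u x)\<^sup>2 * (h1 * h2)) \<partial>count_space (node_point ` nodes1))
      = (\<integral>\<^sup>+z. ennreal (h1 * h2) * ennreal ((lattice_diff1 node_vals h1 z)\<^sup>2) \<partial>count_space nodes1)"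
    unfolding nn_integral_node_points using h_pos
    by (intro nn_integral_cong) (simp add: Dplus1_node_point ennreal_mult[symmetric] mult.commute)
  then show ?thesis
    by (simp add: nn_integral_cmult)
qed

lemma nn_integral_Dplus2_sq:
  "(\<integral>\<^sup>+x. ennreal ((Dplus2 h2 u x)\<^sup>2 * (h1 * h2)) \<partial>count_space (node_point ` nodes2))
     = ennreal (h1 * h2) * (\<integral>\<^sup>+z. ennreal ((lattice_diff2 node_vals h2 z)\<^sup>2) \<partial>count_space nodes2)"
proof -
  have "(\<integral>\<^sup>+x. ennreal ((Dplus2 h2 u x)\<^sup>2 * (h1 * h2)) \<partial>count_space (node_point ` nodes2))
      = (\<integral>\<^sup>+z. ennreal (h1 * h2) * ennreal ((lattice_diff2 node_vals h2 z)\<^sup>2) \<partial>count_space nodes2)"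
    unfolding nn_integral_node_points using h_pos
    by (intro nn_integral_cong) (simp add: Dplus2_node_point ennreal_mult[symmetric] mult.commute)
  then show ?thesis
    by (simp add: nn_integral_cmult)
qed

lemma interpolant_gradient_energy:
  "\<exists>grad. (AE x in lborel. x \<in> box_ereal a1 b1 a2 b2 \<longrightarrow> GDERIV interpolant x :> grad x)
     \<and> (\<integral>\<^sup>+x. ennreal ((norm (grad x))\<^sup>2) * indicator (box_ereal a1 b1 a2 b2) x \<partial>lborel)
       \<le> (\<integral>\<^sup>+x. ennreal ((Dplus1 h1 u x)\<^sup>2 * (h1 * h2)) \<partial>count_space (node_point ` nodes1))
        + (\<integral>\<^sup>+x. ennreal ((Dplus2 h2 u x)\<^sup>2 * (h1 * h2)) \<partial>count_space (node_point ` nodes2))"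
proof (intro exI conjI)
  show "AE x in lborel. x \<in> box_ereal a1 b1 a2 b2 \<longrightarrow>
      GDERIV interpolant x :> pl_grad node_vals h1 h2 (fst x / h1, snd x / h2)"
    using AE_lborel_scaled_not_lattice_lines[OF h_nonzero]
  proof eventually_elim
    case (elim x)
    then show ?case
      using mesh_interp_has_derivative[OF h_pos elim, of node_vals]
      by (simp add: gderiv_def interpolant_def inner_commute)
  qed
  show "(\<integral>\<^sup>+x. ennreal ((norm (pl_grad node_vals h1 h2 (fst x / h1, snd x / h2)))\<^sup>2)
          * indicator (box_ereal a1 b1 a2 b2) x \<partial>lborel)
       \<le> (\<integral>\<^sup>+x. ennreal ((Dplus1 h1 u x)\<^sup>2 * (h1 * h2)) \<partial>count_space (node_point ` nodes1))
        + (\<integral>\<^sup>+x. ennreal ((Dplus2 h2 u x)\<^sup>2 * (h1 * h2)) \<partial>count_space (node_point ` nodes2))"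
    unfolding nn_integral_Dplus1_sq nn_integral_Dplus2_sq distrib_left[symmetric]
    using h_pos box_point_cell cell_edges_in_nodes by (rule nn_integral_pl_grad_sq_le)
qed

end

theorem mainTheorem17:
  fixes h1 h2 :: real and a1 b1 a2 b2 :: ereal and u :: "real \<times> real \<Rightarrow> real" and p :: nat
  assumes h_pos: "h1 > 0" "h2 > 0"
    and aligned: "lower_aligned h1 a1" "upper_aligned h1 b1" "lower_aligned h2 a2" "upper_aligned h2 b2"
    and wide: "a1 + ereal h1 < b1" "a2 + ereal h2 < b2"
    and u_nonneg: "\<forall>y \<in> closure (box_ereal a1 b1 a2 b2) \<inter> grid h1 h2. u y \<ge> 0"
    and p_pos: "p \<ge> 1"
  shows "\<exists>ut :: real \<times> real \<Rightarrow> real.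
    (let \<Omega> = box_ereal a1 b1 a2 b2;
         \<Omega>c = closure \<Omega>;
         \<Omega>h = \<Omega>c \<inter> grid h1 h2;
         B1 = \<Omega>h \<inter> frontier \<Omega> \<inter> {x. ereal (fst x) = b1};
         B2 = \<Omega>h \<inter> frontier \<Omega> \<inter> {x. ereal (snd x) = b2};
         S = (\<integral>\<^sup>+ x. ennreal (u x ^ p * (h1 * h2)) \<partial>count_space \<Omega>h)
     in continuous_on \<Omega>c ut
      \<and> (\<forall>x\<in>\<Omega>c. ut x \<ge> 0)
      \<and> (\<forall>z1 z2. tri1 h1 h2 z1 z2 \<subseteq> \<Omega>c \<longrightarrow> affine_on ut (tri1 h1 h2 z1 z2))
      \<and> (\<forall>z1 z2. tri2 h1 h2 z1 z2 \<subseteq> \<Omega>c \<longrightarrow> affine_on ut (tri2 h1 h2 z1 z2))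
      \<and> (\<forall>y\<in>\<Omega>h. u y = ut y)
      \<and> (\<forall>x\<in>\<Omega>h - B1. ((\<lambda>t. ut (fst x + t, snd x)) has_real_derivative Dplus1 h1 u x) (at_right 0))
      \<and> (\<forall>x\<in>\<Omega>h - B2. ((\<lambda>t. ut (fst x, snd x + t)) has_real_derivative Dplus2 h2 u x) (at_right 0))
      \<and> ennreal (1 / (8 * real p ^ 2)) * S \<le> (\<integral>\<^sup>+ x\<in>\<Omega>. ennreal (ut x ^ p) \<partial>lborel)
      \<and> (\<integral>\<^sup>+ x\<in>\<Omega>. ennreal (ut x ^ p) \<partial>lborel) \<le> 8 * S
      \<and> (\<exists>grad :: real \<times> real \<Rightarrow> real \<times> real.
           (AE x in lborel. x \<in> \<Omega> \<longrightarrow> GDERIV ut x :> grad x)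
         \<and> (\<integral>\<^sup>+ x\<in>\<Omega>. ennreal ((norm (grad x))\<^sup>2) \<partial>lborel)
           \<le> (\<integral>\<^sup>+ x. ennreal ((Dplus1 h1 u x)\<^sup>2 * (h1 * h2)) \<partial>count_space (\<Omega>h - B1))
            + (\<integral>\<^sup>+ x. ennreal ((Dplus2 h2 u x)\<^sup>2 * (h1 * h2)) \<partial>count_space (\<Omega>h - B2))))"
proof -
  interpret mesh_function h1 h2 a1 b1 a2 b2 u
    using h_pos aligned wide u_nonneg by unfold_locales
  show ?thesis
    unfolding Let_def grid_points_off_right_edge grid_points_off_top_edge
    unfolding grid_points_eq
    using continuous_on_interpolant interpolant_nonneg affine_on_interpolant interpolant_interpolates
      interpolant_right_deriv1 interpolant_right_deriv2 nn_integral_interpolant_power_lower[OF p_pos]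
      nn_integral_interpolant_power_upper interpolant_gradient_energy
    by (intro exI[of _ interpolant] conjI allI impI ballI) auto
qed

end
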